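(* Let $a<b$ be real numbers, $n\in\mathbb{N}$, and let $F_1,F_2\colon[a,b]\to\mathbb{R}$ be functions of bounded variation with $F_1(a)=F_2(a)$. For a function $G\colon[a,b]\to\mathbb{R}$ of bounded variation define $J_0^G=G$ and $J_k^G(x)=\int_a^x J_{k-1}^G(s)\,ds$ for $x\in[a,b]$, $k\ge 1$, so that $J_k^G(x)=\int_a^x\int_a^{x_{k-1}}\cdots\int_a^{x_1}G(t)\,dt\,dx_1\cdots dx_{k-1}$. Then $$\int_a^b f(x)\,dF_1(x)\le\int_a^b f(x)\,dF_2(x)\quad\text{for all continuous $n$-convex functions } f\colon[a,b]\to\mathbb{R}$$ holds if and only if the following conditions are satisfied: (i) $F_1(b)=F_2(b)$; (ii) $\int_a^b F_1(x)\,dx=\int_a^b F_2(x)\,dx$; (iii) $J_k^{F_1}(b)=J_k^{F_2}(b)$ for $k=2,\dots,n$; (iv) $(-1)^{n+1}J_n^{F_1}(x)\le(-1)^{n+1}J_n^{F_2}(x)$ for every $x\in(a,b)$.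
   Context: A function $f$ on an interval is called $n$-convex ($n\ge1$) in the sense of Popoviciu, i.e. all its divided differences of order $n+1$ are nonnegative; equivalently, $f^{(n-1)}$ exists and is convex (so $1$-convex means convex), and for $f$ continuous on $[a,b]$ and $(n+1)$-times differentiable on $(a,b)$ this is equivalent to $f^{(n+1)}\ge0$ on $(a,b)$. Integrals $\int f\,dF$ are Riemann–Stieltjes integrals. *)

theory Defs
  imports "HOL-Analysis.Analysis"
begin

definition bounded_variation_on :: "(real \<Rightarrow> real) \<Rightarrow> real \<Rightarrow> real \<Rightarrow> bool" where
  "bounded_variation_on F a b \<longleftrightarrow>
     (\<exists>M. \<forall>(m::nat) (x::nat \<Rightarrow> real).
        x 0 = a \<and> x m = b \<and> (\<forall>i<m. x i \<le> x (Suc i)) \<longrightarrow>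
        (\<Sum>i<m. \<bar>F (x (Suc i)) - F (x i)\<bar>) \<le> M)"

definition has_RS_integral :: "(real \<Rightarrow> real) \<Rightarrow> (real \<Rightarrow> real) \<Rightarrow> real \<Rightarrow> real \<Rightarrow> real \<Rightarrow> bool" where
  "has_RS_integral f F a b I \<longleftrightarrow>
     (\<forall>\<epsilon>>0. \<exists>\<delta>>0. \<forall>(m::nat) (x::nat \<Rightarrow> real) (t::nat \<Rightarrow> real).
        x 0 = a \<and> x m = b \<and>
        (\<forall>i<m. x i \<le> t i \<and> t i \<le> x (Suc i) \<and> x (Suc i) - x i < \<delta>) \<longrightarrow>
        \<bar>(\<Sum>i<m. f (t i) * (F (x (Suc i)) - F (x i))) - I\<bar> < \<epsilon>)"

definition RS_integral :: "(real \<Rightarrow> real) \<Rightarrow> (real \<Rightarrow> real) \<Rightarrow> real \<Rightarrow> real \<Rightarrow> real" where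
  "RS_integral f F a b = (THE I. has_RS_integral f F a b I)"

definition divided_diff :: "nat \<Rightarrow> (nat \<Rightarrow> real) \<Rightarrow> (real \<Rightarrow> real) \<Rightarrow> real" where
  "divided_diff k x f = (\<Sum>i\<le>k. f (x i) / (\<Prod>j\<in>{..k} - {i}. (x i - x j)))"

definition n_convex_on :: "nat \<Rightarrow> real set \<Rightarrow> (real \<Rightarrow> real) \<Rightarrow> bool" where
  "n_convex_on n S f \<longleftrightarrow>
     (\<forall>x::nat \<Rightarrow> real. (\<forall>i\<le>n+1. x i \<in> S) \<and> inj_on x {..n+1} \<longrightarrow>
        divided_diff (n+1) x f \<ge> 0)"

fun J :: "nat \<Rightarrow> (real \<Rightarrow> real) \<Rightarrow> real \<Rightarrow> real \<Rightarrow> real" where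
  "J 0 G a x = G x"
| "J (Suc k) G a x = integral {a..x} (J k G a)"

end

theory Submission
  imports Defs
begin

text \<open>
  Put \<open>H = F2 - F1\<close>, so that \<open>H a = 0\<close>. Integrating by parts \<open>n + 1\<close> times gives, for a smooth
  integrand \<open>\<phi>\<close>,
  \<open>\<integral> \<phi> dH = (\<Sum>k\<le>n. (-1)^k \<phi>^(k)(b) J k H a b) + (-1)^(n+1) \<integral>[a,b] J n H a \<cdot> \<phi>^(n+1)\<close>.

  Sufficiency: a continuous \<open>n\<close>-convex \<open>f\<close> is the uniform limit of its Bernstein polynomials, whose
  \<open>(n+1)\<close>-st derivatives are nonnegative combinations of \<open>(n+1)\<close>-st forward differences of \<open>f\<close>, i.e.
  of divided differences at equispaced nodes. Under (i)--(iv) the formula makes their integrals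
  against \<open>H\<close> nonnegative, and the Riemann--Stieltjes integral passes to uniform limits.

  Necessity: the polynomials \<open>\<plusminus>(x - b)^j\<close> with \<open>j \<le> n\<close> are \<open>n\<close>-convex and isolate \<open>J j H a b\<close> in the
  formula, which gives (i)--(iii). If (iv) failed at some point, continuity yields a polynomial
  \<open>q \<ge> 0\<close> with \<open>\<integral>[a,b] (-1)^(n+1) J n H a \<cdot> q < 0\<close>; an \<open>(n+1)\<close>-fold antiderivative of \<open>q\<close> is then an
  \<open>n\<close>-convex polynomial with negative integral.
\<close>

section \<open>Riemann--Stieltjes sums\<close>

definition subdivision :: "real \<Rightarrow> real \<Rightarrow> nat \<Rightarrow> (nat \<Rightarrow> real) \<Rightarrow> bool" where
  "subdivision a b m x \<longleftrightarrow> x 0 = a \<and> x m = b \<and> (\<forall>i<m. x i \<le> x (Suc i))"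

definition fine_tagged :: "real \<Rightarrow> real \<Rightarrow> real \<Rightarrow> nat \<Rightarrow> (nat \<Rightarrow> real) \<Rightarrow> (nat \<Rightarrow> real) \<Rightarrow> bool" where
  "fine_tagged d a b m x t \<longleftrightarrow> x 0 = a \<and> x m = b \<and>
     (\<forall>i<m. x i \<le> t i \<and> t i \<le> x (Suc i) \<and> x (Suc i) - x i < d)"

definition RS_sum :: "(real \<Rightarrow> real) \<Rightarrow> (real \<Rightarrow> real) \<Rightarrow> nat \<Rightarrow> (nat \<Rightarrow> real) \<Rightarrow> (nat \<Rightarrow> real) \<Rightarrow> real" where
  "RS_sum f F m x t = (\<Sum>i<m. f (t i) * (F (x (Suc i)) - F (x i)))"

definition variation_sum :: "(real \<Rightarrow> real) \<Rightarrow> nat \<Rightarrow> (nat \<Rightarrow> real) \<Rightarrow> real" where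
  "variation_sum F m x = (\<Sum>i<m. \<bar>F (x (Suc i)) - F (x i)\<bar>)"

lemma has_RS_integral_iff:
  "has_RS_integral f F a b I \<longleftrightarrow>
     (\<forall>e>0. \<exists>d>0. \<forall>m x t. fine_tagged d a b m x t \<longrightarrow> \<bar>RS_sum f F m x t - I\<bar> < e)"
  unfolding has_RS_integral_def fine_tagged_def RS_sum_def by auto

lemma subdivision_mono:
  assumes "subdivision a b m x" "i \<le> j" "j \<le> m"
  shows "x i \<le> x j"
  using assms(2,3)
proof (induction j)
  case (Suc j)
  show ?case
  proof (cases "i = Suc j")
    case False
    then have "x i \<le> x j" using Suc by simp
    also have "x j \<le> x (Suc j)" using assms(1) Suc.prems unfolding subdivision_def by simp
    finally show ?thesis .
  qed simp
qed simp

lemma subdivision_in: "subdivision a b m x \<Longrightarrow> i \<le> m \<Longrightarrow> x i \<in> {a..b}"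
  using subdivision_mono[of a b m x 0 i] subdivision_mono[of a b m x i m]
  unfolding subdivision_def by auto

lemma subdivision_snoc:
  assumes "subdivision a c m x" "c \<le> z"
  shows "subdivision a z (Suc m) (x(Suc m := z))"
proof -
  have "x m = c" using assms(1) unfolding subdivision_def by simp
  then show ?thesis
    using assms unfolding subdivision_def by (auto simp: less_Suc_eq)
qed

lemma fine_tagged_subdivision: "fine_tagged d a b m x t \<Longrightarrow> subdivision a b m x"
  unfolding fine_tagged_def subdivision_def by force

lemma fine_tagged_tag_in:
  assumes "fine_tagged d a b m x t" "i < m"
  shows "t i \<in> {a..b}"
proof -
  have "x i \<le> t i" "t i \<le> x (Suc i)" using assms unfolding fine_tagged_def by auto
  then show ?thesis
    using subdivision_in[OF fine_tagged_subdivision[OF assms(1)], of i]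
      subdivision_in[OF fine_tagged_subdivision[OF assms(1)], of "Suc i"] assms(2) by auto
qed

lemma fine_tagged_mono: "fine_tagged d a b m x t \<Longrightarrow> d \<le> d' \<Longrightarrow> fine_tagged d' a b m x t"
  unfolding fine_tagged_def by (meson less_le_trans)

lemma fine_tagged_exists:
  assumes "a \<le> b" "d > 0"
  shows "\<exists>m x. fine_tagged d a b m x x"
proof -
  obtain m :: nat where m: "(b - a) / d < m" using reals_Archimedean2 by blast
  have "m > 0" using m assms
    by (metis divide_nonneg_pos diff_ge_0_iff_ge of_nat_0_less_iff order_le_less_trans)
  define x where "x = (\<lambda>i::nat. a + real i * (b - a) / m)"
  have "x (Suc i) - x i = (b - a) / m" for i
    unfolding x_def by (simp add: add_divide_distrib diff_divide_distrib algebra_simps)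
  moreover have "x i \<le> x (Suc i)" for i
    unfolding x_def using assms \<open>m > 0\<close> by (simp add: field_simps)
  moreover have "(b - a) / m < d" using m \<open>m > 0\<close> assms by (simp add: field_simps)
  ultimately have "fine_tagged d a b m x x"
    unfolding fine_tagged_def using \<open>m > 0\<close> by (auto simp: x_def)
  then show ?thesis by blast
qed

lemma has_RS_integral_unique:
  assumes "a \<le> b" "has_RS_integral f F a b I" "has_RS_integral f F a b I'"
  shows "I = I'"
proof (rule ccontr)
  assume "I \<noteq> I'"
  then have e: "\<bar>I - I'\<bar> / 2 > 0" by simp
  obtain d where d: "d > 0" "\<And>m x t. fine_tagged d a b m x t \<Longrightarrow> \<bar>RS_sum f F m x t - I\<bar> < \<bar>I - I'\<bar> / 2"
    using assms(2) e unfolding has_RS_integral_iff by blast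
  obtain d' where d': "d' > 0" "\<And>m x t. fine_tagged d' a b m x t \<Longrightarrow> \<bar>RS_sum f F m x t - I'\<bar> < \<bar>I - I'\<bar> / 2"
    using assms(3) e unfolding has_RS_integral_iff by blast
  obtain m x where p: "fine_tagged (min d d') a b m x x" using fine_tagged_exists[OF assms(1)] d d' by force
  show False
    using d(2)[OF fine_tagged_mono[OF p]] d'(2)[OF fine_tagged_mono[OF p]] by (simp add: abs_if split: if_split_asm)
qed

lemma RS_integral_eqI:
  assumes "a \<le> b" "has_RS_integral f F a b I"
  shows "RS_integral f F a b = I"
  unfolding RS_integral_def
proof (rule the_equality)
  show "I' = I" if "has_RS_integral f F a b I'" for I'
    using has_RS_integral_unique[OF assms(1) that assms(2)] .
qed (rule assms(2))

lemma has_RS_integral_diff: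
  assumes "has_RS_integral f F a b I" "has_RS_integral f G a b I'"
  shows "has_RS_integral f (\<lambda>x. F x - G x) a b (I - I')"
  unfolding has_RS_integral_iff
proof (intro allI impI)
  fix e :: real assume "e > 0"
  then have "e / 2 > 0" by simp
  obtain d where d: "d > 0" "\<forall>m x t. fine_tagged d a b m x t \<longrightarrow> \<bar>RS_sum f F m x t - I\<bar> < e/2"
    using assms(1) \<open>e / 2 > 0\<close> unfolding has_RS_integral_iff by blast
  obtain d' where d': "d' > 0" "\<forall>m x t. fine_tagged d' a b m x t \<longrightarrow> \<bar>RS_sum f G m x t - I'\<bar> < e/2"
    using assms(2) \<open>e / 2 > 0\<close> unfolding has_RS_integral_iff by blast
  have split: "RS_sum f (\<lambda>x. F x - G x) m x t = RS_sum f F m x t - RS_sum f G m x t" for m x t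
    unfolding RS_sum_def by (simp add: sum_subtractf[symmetric] algebra_simps)
  show "\<exists>d>0. \<forall>m x t. fine_tagged d a b m x t \<longrightarrow> \<bar>RS_sum f (\<lambda>x. F x - G x) m x t - (I - I')\<bar> < e"
  proof (intro exI[of _ "min d d'"] conjI allI impI)
    fix m x t assume p: "fine_tagged (min d d') a b m x t"
    have "\<bar>RS_sum f F m x t - I\<bar> < e/2" "\<bar>RS_sum f G m x t - I'\<bar> < e/2"
      using d(2) d'(2) fine_tagged_mono[OF p] by auto
    then show "\<bar>RS_sum f (\<lambda>x. F x - G x) m x t - (I - I')\<bar> < e" unfolding split by linarith
  qed (use d d' in auto)
qed

lemma has_RS_integral_uminus:
  assumes "has_RS_integral f F a b I"
  shows "has_RS_integral (\<lambda>x. - f x) F a b (- I)"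
proof -
  have "\<bar>RS_sum (\<lambda>x. - f x) F m x t - - I\<bar> = \<bar>RS_sum f F m x t - I\<bar>" for m x t
    unfolding RS_sum_def by (simp add: sum_negf abs_minus_commute)
  then show ?thesis using assms unfolding has_RS_integral_iff by simp
qed

lemma RS_sum_diff_le:
  assumes "subdivision a b m x" "\<And>i. i < m \<Longrightarrow> t i \<in> {a..b}"
    and "\<And>y. y \<in> {a..b} \<Longrightarrow> \<bar>f y - g y\<bar> \<le> e"
  shows "\<bar>RS_sum f F m x t - RS_sum g F m x t\<bar> \<le> e * variation_sum F m x"
proof -
  have "\<bar>RS_sum f F m x t - RS_sum g F m x t\<bar> = \<bar>\<Sum>i<m. (f (t i) - g (t i)) * (F (x (Suc i)) - F (x i))\<bar>"
    unfolding RS_sum_def sum_subtractf[symmetric] by (simp add: algebra_simps)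
  also have "\<dots> \<le> (\<Sum>i<m. \<bar>f (t i) - g (t i)\<bar> * \<bar>F (x (Suc i)) - F (x i)\<bar>)"
    by (rule order_trans[OF sum_abs]) (simp add: abs_mult)
  also have "\<dots> \<le> (\<Sum>i<m. e * \<bar>F (x (Suc i)) - F (x i)\<bar>)"
    using assms(2,3) by (intro sum_mono mult_right_mono) auto
  finally show ?thesis by (simp add: sum_distrib_left variation_sum_def)
qed

section \<open>Functions of bounded variation\<close>

definition variation :: "(real \<Rightarrow> real) \<Rightarrow> real \<Rightarrow> real \<Rightarrow> real" where
  "variation F a c = Sup {variation_sum F m x | m x. subdivision a c m x}"

lemma bounded_variation_on_iff:
  "bounded_variation_on F a b \<longleftrightarrow> (\<exists>M. \<forall>m x. subdivision a b m x \<longrightarrow> variation_sum F m x \<le> M)"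
  unfolding bounded_variation_on_def subdivision_def variation_sum_def by auto

lemma bounded_variation_bound_nonneg:
  assumes "bounded_variation_on F a b"
  obtains M where "M \<ge> 0" "\<forall>m x. subdivision a b m x \<longrightarrow> variation_sum F m x \<le> M"
proof -
  obtain M where "\<forall>m x. subdivision a b m x \<longrightarrow> variation_sum F m x \<le> M"
    using assms unfolding bounded_variation_on_iff by blast
  then show ?thesis using that[of "max M 0"] by fastforce
qed

lemma variation_sum_snoc:
  assumes "subdivision a c m x"
  shows "variation_sum F (Suc m) (x(Suc m := z)) = variation_sum F m x + \<bar>F z - F c\<bar>"
  using assms unfolding variation_sum_def subdivision_def by simp

lemma subdivision_two_points: "a \<le> c \<Longrightarrow> subdivision a c 1 (\<lambda>i. if i = 0 then a else c)"
  unfolding subdivision_def by simp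

lemma variation_sums_bdd_above:
  assumes "bounded_variation_on F a b" "c \<le> b"
  shows "bdd_above {variation_sum F m x | m x. subdivision a c m x}"
proof -
  obtain M where M: "\<forall>m x. subdivision a b m x \<longrightarrow> variation_sum F m x \<le> M"
    using assms(1) unfolding bounded_variation_on_iff by blast
  have "variation_sum F m x \<le> M" if "subdivision a c m x" for m x
    using M subdivision_snoc[OF that assms(2)] variation_sum_snoc[OF that, of F b] by fastforce
  then show ?thesis unfolding bdd_above_def by blast
qed

lemma variation_sum_le_variation:
  assumes "bounded_variation_on F a b" "c \<le> b" "subdivision a c m x"
  shows "variation_sum F m x \<le> variation F a c"
  unfolding variation_def using variation_sums_bdd_above[OF assms(1,2)] assms(3)
  by (intro cSup_upper) auto

lemma variation_add_increment_le:
  assumes "bounded_variation_on F a b" "a \<le> c" "c \<le> z" "z \<le> b"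
  shows "variation F a c + \<bar>F z - F c\<bar> \<le> variation F a z"
proof -
  have "variation F a c \<le> variation F a z - \<bar>F z - F c\<bar>"
    unfolding variation_def[of F a c]
  proof (rule cSup_least)
    show "{variation_sum F m x | m x. subdivision a c m x} \<noteq> {}"
      using subdivision_two_points[OF assms(2)] by blast
    fix s assume "s \<in> {variation_sum F m x | m x. subdivision a c m x}"
    then obtain m x where s: "s = variation_sum F m x" "subdivision a c m x" by blast
    have "variation_sum F m x + \<bar>F z - F c\<bar> \<le> variation F a z"
      using variation_sum_le_variation[OF assms(1) assms(4) subdivision_snoc[OF s(2) assms(3)]]
      unfolding variation_sum_snoc[OF s(2)] .
    then show "s \<le> variation F a z - \<bar>F z - F c\<bar>" using s by simp
  qed
  then show ?thesis by simp
qed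

lemma bounded_variation_Jordan_decomposition:
  assumes "bounded_variation_on F a b"
  obtains P Q where "mono_on {a..b} P" "mono_on {a..b} Q" "F = (\<lambda>x. P x - Q x)"
proof
  show "mono_on {a..b} (variation F a)"
    by (intro mono_onI) (use variation_add_increment_le[OF assms] in force)
  show "mono_on {a..b} (\<lambda>x. variation F a x - F x)"
  proof (intro mono_onI)
    fix r s assume "r \<in> {a..b}" "s \<in> {a..b}" "r \<le> s"
    then have "variation F a r + \<bar>F s - F r\<bar> \<le> variation F a s"
      using variation_add_increment_le[OF assms] by auto
    then show "variation F a r - F r \<le> variation F a s - F s" by linarith
  qed
qed simp

lemma bounded_variation_bounded:
  assumes "bounded_variation_on F a b"
  obtains M where "\<And>x. x \<in> {a..b} \<Longrightarrow> \<bar>F x\<bar> \<le> M"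
proof -
  obtain P Q where PQ: "mono_on {a..b} P" "mono_on {a..b} Q" "F = (\<lambda>x. P x - Q x)"
    using bounded_variation_Jordan_decomposition[OF assms] by blast
  have "\<bar>F x\<bar> \<le> \<bar>P a\<bar> + \<bar>P b\<bar> + \<bar>Q a\<bar> + \<bar>Q b\<bar>" if x: "x \<in> {a..b}" for x
  proof -
    have "P a \<le> P x" "P x \<le> P b" "Q a \<le> Q x" "Q x \<le> Q b"
      using x PQ(1,2) by (auto intro: mono_onD)
    then show ?thesis using PQ(3) by simp
  qed
  then show ?thesis using that by blast
qed

lemma bounded_variation_integrable:
  assumes "bounded_variation_on F a b"
  shows "F integrable_on {a..b}"
proof -
  obtain P Q where PQ: "mono_on {a..b} P" "mono_on {a..b} Q" "F = (\<lambda>x. P x - Q x)"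
    using bounded_variation_Jordan_decomposition[OF assms] by blast
  show ?thesis
    unfolding PQ(3) using PQ(1,2) by (intro integrable_diff integrable_on_mono_on)
qed

lemma bounded_variation_diff:
  assumes "bounded_variation_on F a b" "bounded_variation_on G a b"
  shows "bounded_variation_on (\<lambda>x. F x - G x) a b"
proof -
  obtain M M' where M: "\<forall>m x. subdivision a b m x \<longrightarrow> variation_sum F m x \<le> M"
    and M': "\<forall>m x. subdivision a b m x \<longrightarrow> variation_sum G m x \<le> M'"
    using assms unfolding bounded_variation_on_iff by blast
  have "variation_sum (\<lambda>x. F x - G x) m x \<le> variation_sum F m x + variation_sum G m x" for m x
    unfolding variation_sum_def sum.distrib[symmetric] by (intro sum_mono) linarith
  then show ?thesis unfolding bounded_variation_on_iff using M M' by (intro exI[of _ "M + M'"]) (smt (verit))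
qed

lemma lipschitz_bounded_variation:
  assumes "\<And>x y. x \<in> {a..b} \<Longrightarrow> y \<in> {a..b} \<Longrightarrow> \<bar>F y - F x\<bar> \<le> C * \<bar>y - x\<bar>"
  shows "bounded_variation_on F a b"
  unfolding bounded_variation_on_iff
proof (intro exI allI impI)
  fix m x assume x: "subdivision a b m x"
  have "variation_sum F m x \<le> (\<Sum>i<m. C * (x (Suc i) - x i))"
    unfolding variation_sum_def
  proof (intro sum_mono)
    fix i assume "i \<in> {..<m}"
    then have "x i \<in> {a..b}" "x (Suc i) \<in> {a..b}" "x i \<le> x (Suc i)"
      using subdivision_in[OF x] x unfolding subdivision_def by auto
    then show "\<bar>F (x (Suc i)) - F (x i)\<bar> \<le> C * (x (Suc i) - x i)"
      using assms by fastforce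
  qed
  also have "\<dots> = C * (b - a)"
    using x sum_lessThan_telescope[of x m] by (simp add: sum_distrib_left[symmetric] subdivision_def)
  finally show "variation_sum F m x \<le> C * (b - a)" .
qed

lemma mono_mult_continuous_integrable:
  fixes G h :: "real \<Rightarrow> real"
  assumes "mono_on {a..b} G" "continuous_on {a..b} h"
  shows "(\<lambda>s. G s * h s) integrable_on {a..b}"
proof -
  have "sets (restrict_space borel {a..b}) \<subseteq> sets (restrict_space lebesgue {a..b})"
    by (rule mono_restrict_space) force
  moreover have "space (restrict_space borel {a..b}) = space (restrict_space lebesgue {a..b})"
    by (simp add: space_restrict_space)
  ultimately have "G \<in> borel_measurable (lebesgue_on {a..b})"
    using borel_measurable_subalgebra borel_measurable_mono_on_fnc[OF assms(1)] by blast
  moreover have "G ` {a..b} \<subseteq> {G a..G b}" using assms(1) by (auto simp: mono_on_def)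
  then have "bounded (G ` {a..b})" by (meson bounded_closed_interval bounded_subset)
  ultimately have "(\<lambda>s. G s * h s) absolutely_integrable_on {a..b}"
    using absolutely_integrable_bounded_measurable_product_real
      absolutely_integrable_continuous_real[OF assms(2)] by auto
  then show ?thesis using absolutely_integrable_on_def by blast
qed

lemma bounded_variation_mult_continuous_integrable:
  assumes "bounded_variation_on G a b" "continuous_on {a..b} h"
  shows "(\<lambda>s. G s * h s) integrable_on {a..b}"
proof -
  obtain P Q where PQ: "mono_on {a..b} P" "mono_on {a..b} Q" "G = (\<lambda>x. P x - Q x)"
    using bounded_variation_Jordan_decomposition[OF assms(1)] by blast
  have "(\<lambda>s. P s * h s - Q s * h s) integrable_on {a..b}"
    using mono_mult_continuous_integrable[OF PQ(1) assms(2)] mono_mult_continuous_integrable[OF PQ(2) assms(2)]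
    by (rule integrable_diff)
  then show ?thesis unfolding PQ(3) by (simp add: algebra_simps)
qed

lemma has_RS_integral_localI:
  assumes ab: "a \<le> b" and W: "mono_on {a..b} W"
    and local: "\<And>r. r > 0 \<Longrightarrow> \<exists>d>0. \<forall>u t v. a \<le> u \<and> u \<le> t \<and> t \<le> v \<and> v \<le> b \<and> v - u < d \<longrightarrow>
                  \<bar>f t * (F v - F u) - (\<Phi> v - \<Phi> u)\<bar> \<le> r * (W v - W u)"
  shows "has_RS_integral f F a b (\<Phi> b - \<Phi> a)"
  unfolding has_RS_integral_iff
proof (intro allI impI)
  fix e :: real assume e: "e > 0"
  have W_ab: "W a \<le> W b" using W ab by (auto intro: mono_onD)
  define r where "r = e / (W b - W a + 1)"
  have r: "r > 0" "r * (W b - W a) < e" unfolding r_def using e W_ab by (auto simp: field_simps)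
  obtain d where d: "d > 0" and dl: "\<forall>u t v. a \<le> u \<and> u \<le> t \<and> t \<le> v \<and> v \<le> b \<and> v - u < d \<longrightarrow>
                  \<bar>f t * (F v - F u) - (\<Phi> v - \<Phi> u)\<bar> \<le> r * (W v - W u)"
    using local[OF r(1)] by blast
  show "\<exists>d>0. \<forall>m x t. fine_tagged d a b m x t \<longrightarrow> \<bar>RS_sum f F m x t - (\<Phi> b - \<Phi> a)\<bar> < e"
  proof (intro exI[of _ d] conjI allI impI d)
    fix m x t assume p: "fine_tagged d a b m x t"
    have x: "subdivision a b m x" using fine_tagged_subdivision[OF p] .
    have "\<Phi> b - \<Phi> a = (\<Sum>i<m. \<Phi> (x (Suc i)) - \<Phi> (x i))"
      using x sum_lessThan_telescope[of "\<lambda>i. \<Phi> (x i)" m] unfolding subdivision_def by simp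
    then have "\<bar>RS_sum f F m x t - (\<Phi> b - \<Phi> a)\<bar>
        = \<bar>\<Sum>i<m. f (t i) * (F (x (Suc i)) - F (x i)) - (\<Phi> (x (Suc i)) - \<Phi> (x i))\<bar>"
      unfolding RS_sum_def by (simp add: sum_subtractf)
    also have "\<dots> \<le> (\<Sum>i<m. r * (W (x (Suc i)) - W (x i)))"
    proof (rule order_trans[OF sum_abs sum_mono])
      fix i assume "i \<in> {..<m}"
      then have "a \<le> x i" "x i \<le> t i" "t i \<le> x (Suc i)" "x (Suc i) \<le> b" "x (Suc i) - x i < d"
        using p subdivision_in[OF x, of i] subdivision_in[OF x, of "Suc i"] unfolding fine_tagged_def by auto
      then show "\<bar>f (t i) * (F (x (Suc i)) - F (x i)) - (\<Phi> (x (Suc i)) - \<Phi> (x i))\<bar>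
          \<le> r * (W (x (Suc i)) - W (x i))" using dl by blast
    qed
    also have "\<dots> = r * (W b - W a)"
      using x sum_lessThan_telescope[of "\<lambda>i. W (x i)" m]
      by (simp add: sum_distrib_left[symmetric] subdivision_def)
    finally show "\<bar>RS_sum f F m x t - (\<Phi> b - \<Phi> a)\<bar> < e" using r(2) by linarith
  qed
qed

lemma RS_sum_dist_le:
  assumes "fine_tagged d a b m x t" "\<forall>m x. subdivision a b m x \<longrightarrow> variation_sum F m x \<le> M"
    and "\<And>y. y \<in> {a..b} \<Longrightarrow> \<bar>f y - g y\<bar> \<le> e" "e \<ge> 0"
  shows "\<bar>RS_sum f F m x t - RS_sum g F m x t\<bar> \<le> e * M"
proof -
  have x: "subdivision a b m x" using fine_tagged_subdivision[OF assms(1)] .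
  have "\<bar>RS_sum f F m x t - RS_sum g F m x t\<bar> \<le> e * variation_sum F m x"
    using RS_sum_diff_le[OF x fine_tagged_tag_in[OF assms(1)] assms(3)] .
  also have "\<dots> \<le> e * M" using assms(2,4) x by (simp add: mult_left_mono)
  finally show ?thesis .
qed

lemma has_RS_integral_dist_le:
  assumes ab: "a \<le> b" and M: "\<forall>m x. subdivision a b m x \<longrightarrow> variation_sum F m x \<le> M"
    and f: "has_RS_integral f F a b I" and g: "has_RS_integral g F a b I'"
    and fg: "\<And>y. y \<in> {a..b} \<Longrightarrow> \<bar>f y - g y\<bar> \<le> e"
  shows "\<bar>I - I'\<bar> \<le> e * M"
proof (rule field_le_epsilon)
  fix r :: real assume "r > 0"
  then have "r / 2 > 0" by simp
  obtain d where d: "d > 0" "\<forall>m x t. fine_tagged d a b m x t \<longrightarrow> \<bar>RS_sum f F m x t - I\<bar> < r/2"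
    using f \<open>r / 2 > 0\<close> unfolding has_RS_integral_iff by blast
  obtain d' where d': "d' > 0" "\<forall>m x t. fine_tagged d' a b m x t \<longrightarrow> \<bar>RS_sum g F m x t - I'\<bar> < r/2"
    using g \<open>r / 2 > 0\<close> unfolding has_RS_integral_iff by blast
  obtain m x where p: "fine_tagged (min d d') a b m x x" using fine_tagged_exists[OF ab] d d' by force
  have "e \<ge> 0" using fg[of a] ab by fastforce
  have "\<bar>RS_sum f F m x x - RS_sum g F m x x\<bar> \<le> e * M"
    using RS_sum_dist_le[OF p M fg \<open>e \<ge> 0\<close>] .
  moreover have "\<bar>RS_sum f F m x x - I\<bar> < r/2" "\<bar>RS_sum g F m x x - I'\<bar> < r/2"
    using d(2) d'(2) fine_tagged_mono[OF p] by auto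
  ultimately show "\<bar>I - I'\<bar> \<le> e * M + r" by (simp add: abs_if split: if_split_asm)
qed

lemma has_RS_integral_limit:
  assumes M: "\<forall>m x. subdivision a b m x \<longrightarrow> variation_sum F m x \<le> M"
    and g: "\<And>k. has_RS_integral (g k) F a b (I k)"
    and approx: "\<And>k y. y \<in> {a..b} \<Longrightarrow> \<bar>f y - g k y\<bar> \<le> e k" "\<And>k. e k \<ge> 0"
    and e: "(\<lambda>k. e k * M) \<longlonglongrightarrow> 0" and I: "I \<longlonglongrightarrow> L"
  shows "has_RS_integral f F a b L"
  unfolding has_RS_integral_iff
proof (intro allI impI)
  fix r :: real assume "r > 0"
  have "eventually (\<lambda>k. e k * M < r / 3) sequentially"
    using e \<open>r > 0\<close> by (intro order_tendstoD) auto
  moreover have "eventually (\<lambda>k. dist (I k) L < r / 3) sequentially"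
    using I \<open>r > 0\<close> by (intro tendstoD) auto
  ultimately have "eventually (\<lambda>k. e k * M < r / 3 \<and> dist (I k) L < r / 3) sequentially"
    by (rule eventually_conj)
  then obtain k where k: "e k * M < r / 3" "\<bar>I k - L\<bar> < r / 3"
    unfolding eventually_sequentially dist_real_def by force
  obtain d where d: "d > 0" "\<forall>m x t. fine_tagged d a b m x t \<longrightarrow> \<bar>RS_sum (g k) F m x t - I k\<bar> < r/3"
    using g[of k] \<open>r > 0\<close> unfolding has_RS_integral_iff by (meson divide_pos_pos zero_less_numeral)
  have "\<bar>RS_sum f F m x t - L\<bar> < r" if p: "fine_tagged d a b m x t" for m x t
  proof -
    have "\<bar>RS_sum f F m x t - RS_sum (g k) F m x t\<bar> \<le> e k * M"
      using RS_sum_dist_le[OF p M approx] .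
    moreover have "\<bar>RS_sum (g k) F m x t - I k\<bar> < r/3" using d(2) p by blast
    ultimately show ?thesis using k by (simp add: abs_if split: if_split_asm)
  qed
  then show "\<exists>d>0. \<forall>m x t. fine_tagged d a b m x t \<longrightarrow> \<bar>RS_sum f F m x t - L\<bar> < r"
    using d(1) by blast
qed

lemma has_RS_integral_uniform_limit:
  assumes ab: "a \<le> b" and bv: "bounded_variation_on F a b"
    and g: "\<And>k. has_RS_integral (g k) F a b (I k)"
    and approx: "\<And>k y. y \<in> {a..b} \<Longrightarrow> \<bar>f y - g k y\<bar> \<le> e k"
    and e: "e \<longlonglongrightarrow> 0"
  shows "\<exists>L. has_RS_integral f F a b L \<and> I \<longlonglongrightarrow> L"
proof -
  obtain M where M: "M \<ge> 0" "\<forall>m x. subdivision a b m x \<longrightarrow> variation_sum F m x \<le> M"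
    using bounded_variation_bound_nonneg[OF bv] by blast
  have e_nonneg: "e k \<ge> 0" for k using approx[of a k] ab by fastforce
  have IJ: "\<bar>I j - I k\<bar> \<le> (e j + e k) * M" for j k
    using approx[of _ j] approx[of _ k]
    by (intro has_RS_integral_dist_le[OF ab M(2) g g]) (smt (verit))
  have eM: "(\<lambda>k. e k * M) \<longlonglongrightarrow> 0" using tendsto_mult_left_zero[OF e] .
  have "Cauchy I"
  proof (rule metric_CauchyI)
    fix r :: real assume "r > 0"
    then have "eventually (\<lambda>k. e k * M < r / 2) sequentially"
      using eM by (intro order_tendstoD) auto
    then obtain N where N: "\<forall>k\<ge>N. e k * M < r / 2"
      unfolding eventually_sequentially by blast
    have "dist (I j) (I k) < r" if "j \<ge> N" "k \<ge> N" for j k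
      using IJ[of j k] N[rule_format, OF that(1)] N[rule_format, OF that(2)]
      by (simp add: dist_real_def distrib_right)
    then show "\<exists>N. \<forall>j\<ge>N. \<forall>k\<ge>N. dist (I j) (I k) < r" by blast
  qed
  then obtain L where L: "I \<longlonglongrightarrow> L" using Cauchy_convergent_iff convergent_def by blast
  then show ?thesis using has_RS_integral_limit[OF M(2) g approx e_nonneg eM L] by blast
qed

section \<open>Integration by parts\<close>

lemma integral_upto_diff:
  fixes G :: "real \<Rightarrow> real"
  assumes "G integrable_on {a..b}" "a \<le> u" "u \<le> v" "v \<le> b"
  shows "integral {a..v} G - integral {a..u} G = integral {u..v} G"
proof -
  have "G integrable_on {a..v}" using assms by (auto intro: integrable_on_subinterval)
  from Henstock_Kurzweil_Integration.integral_combine[OF assms(2,3) this] show ?thesis by simp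
qed

lemma integral_mult_abs_le:
  fixes g h :: "real \<Rightarrow> real"
  assumes "(\<lambda>s. g s * h s) integrable_on {p..q}" "p \<le> q"
    and "\<And>s. s \<in> {p..q} \<Longrightarrow> \<bar>g s\<bar> \<le> B" "\<And>s. s \<in> {p..q} \<Longrightarrow> \<bar>h s\<bar> \<le> K"
  shows "\<bar>integral {p..q} (\<lambda>s. g s * h s)\<bar> \<le> B * K * (q - p)"
proof -
  have "norm (integral {p..q} (\<lambda>s. g s * h s)) \<le> (B * K) * Henstock_Kurzweil_Integration.content {p..q}"
  proof (rule has_integral_bound_real[OF _ _ integrable_integral[OF assms(1)], of _ "{}"])
    show "0 \<le> B * K" using assms(2) assms(3,4)[of p] by (auto intro: mult_nonneg_nonneg)
    show "norm (g s * h s) \<le> B * K" if "s \<in> {p..q} - {}" for s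
      using assms(3,4)[of s] that by (auto simp: abs_mult intro: mult_mono)
  qed auto
  then show ?thesis using assms(2) by simp
qed

text \<open>Splitting \<open>[u,v]\<close> at the tag \<open>t\<close>, the error is \<open>\<integral>\<^sub>u\<^sup>t (G s - G u) \<phi>' s ds + \<integral>\<^sub>t\<^sup>v (G s - G v) \<phi>' s ds\<close>.\<close>

lemma parts_local_error_mono:
  fixes G :: "real \<Rightarrow> real"
  assumes G: "mono_on {a..b} G" and \<phi>: "\<And>x. (\<phi> has_real_derivative \<phi>' x) (at x)"
    and \<phi>': "continuous_on {a..b} \<phi>'" "\<And>x. x \<in> {a..b} \<Longrightarrow> \<bar>\<phi>' x\<bar> \<le> K"
    and uvt: "a \<le> u" "u \<le> t" "t \<le> v" "v \<le> b"
  shows "\<bar>\<phi> t * (G v - G u) - (\<phi> v * G v - \<phi> u * G u - integral {u..v} (\<lambda>s. G s * \<phi>' s))\<bar>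
          \<le> K * (v - u) * (G v - G u)"
proof -
  have int: "(\<lambda>s. G s * \<phi>' s) integrable_on {c..d}" if "a \<le> c" "d \<le> b" for c d
    by (rule integrable_on_subinterval[OF mono_mult_continuous_integrable[OF G \<phi>'(1)]]) (use that in auto)
  have ftc: "(\<phi>' has_integral (\<phi> d - \<phi> c)) {c..d}" if "c \<le> d" for c d
    using that \<phi>
    by (intro fundamental_theorem_of_calculus)
       (auto simp: has_real_derivative_iff_has_vector_derivative[symmetric] intro: has_field_derivative_at_within)
  have int1: "((\<lambda>s. (G s - G u) * \<phi>' s) has_integral
      integral {u..t} (\<lambda>s. G s * \<phi>' s) - G u * (\<phi> t - \<phi> u)) {u..t}"
    unfolding left_diff_distrib using uvt
    by (intro has_integral_diff integrable_integral int has_integral_mult_right ftc) auto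
  have int2: "((\<lambda>s. (G s - G v) * \<phi>' s) has_integral
      integral {t..v} (\<lambda>s. G s * \<phi>' s) - G v * (\<phi> v - \<phi> t)) {t..v}"
    unfolding left_diff_distrib using uvt
    by (intro has_integral_diff integrable_integral int has_integral_mult_right ftc) auto
  have GuGv: "G u \<le> G s" "G s \<le> G v" if "s \<in> {u..v}" for s
    using that uvt G by (auto intro: mono_onD)
  have bound1: "\<bar>integral {u..t} (\<lambda>s. (G s - G u) * \<phi>' s)\<bar> \<le> (G v - G u) * K * (t - u)"
    using int1 uvt GuGv \<phi>'(2) by (intro integral_mult_abs_le) (auto simp: has_integral_integrable)
  have bound2: "\<bar>integral {t..v} (\<lambda>s. (G s - G v) * \<phi>' s)\<bar> \<le> (G v - G u) * K * (v - t)"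
    using int2 uvt GuGv \<phi>'(2) by (intro integral_mult_abs_le) (auto simp: has_integral_integrable)
  have "integral {u..v} (\<lambda>s. G s * \<phi>' s) = integral {u..t} (\<lambda>s. G s * \<phi>' s) + integral {t..v} (\<lambda>s. G s * \<phi>' s)"
    using Henstock_Kurzweil_Integration.integral_combine[OF uvt(2,3) int[OF uvt(1,4)]] by simp
  then have "\<phi> t * (G v - G u) - (\<phi> v * G v - \<phi> u * G u - integral {u..v} (\<lambda>s. G s * \<phi>' s))
      = integral {u..t} (\<lambda>s. (G s - G u) * \<phi>' s) + integral {t..v} (\<lambda>s. (G s - G v) * \<phi>' s)"
    using integral_unique[OF int1] integral_unique[OF int2] by (simp add: algebra_simps)
  then show ?thesis using bound1 bound2 by (simp add: abs_if algebra_simps split: if_split_asm)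
qed

lemma continuous_on_Icc_abs_bound:
  fixes f :: "real \<Rightarrow> real"
  assumes "continuous_on {a..b} f"
  obtains K where "K \<ge> 0" "\<And>x. x \<in> {a..b} \<Longrightarrow> \<bar>f x\<bar> \<le> K"
proof -
  obtain K where "\<forall>x\<in>{a..b}. \<bar>f x\<bar> \<le> K"
    using compact_imp_bounded[OF compact_continuous_image[OF assms compact_Icc]]
    unfolding bounded_iff by auto
  then show ?thesis using that[of "max K 0"] by fastforce
qed

lemma has_RS_integral_parts_mono:
  fixes G :: "real \<Rightarrow> real"
  assumes ab: "a \<le> b" and G: "mono_on {a..b} G"
    and \<phi>: "\<And>x. (\<phi> has_real_derivative \<phi>' x) (at x)" and \<phi>': "continuous_on {a..b} \<phi>'"
  shows "has_RS_integral \<phi> G a b (\<phi> b * G b - \<phi> a * G a - integral {a..b} (\<lambda>s. G s * \<phi>' s))"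
proof -
  obtain K where K: "K \<ge> 0" "\<And>x. x \<in> {a..b} \<Longrightarrow> \<bar>\<phi>' x\<bar> \<le> K"
    using continuous_on_Icc_abs_bound[OF \<phi>'] by blast
  define \<Phi> where "\<Phi> x = \<phi> x * G x - integral {a..x} (\<lambda>s. G s * \<phi>' s)" for x
  have int: "(\<lambda>s. G s * \<phi>' s) integrable_on {a..b}"
    using mono_mult_continuous_integrable[OF G \<phi>'] .
  have "has_RS_integral \<phi> G a b (\<Phi> b - \<Phi> a)"
  proof (rule has_RS_integral_localI[OF ab G])
    fix r :: real assume "r > 0"
    show "\<exists>d>0. \<forall>u t v. a \<le> u \<and> u \<le> t \<and> t \<le> v \<and> v \<le> b \<and> v - u < d \<longrightarrow>
            \<bar>\<phi> t * (G v - G u) - (\<Phi> v - \<Phi> u)\<bar> \<le> r * (G v - G u)"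
    proof (intro exI[of _ "r / (K + 1)"] conjI allI impI)
      show "r / (K + 1) > 0" using \<open>r > 0\<close> K(1) by simp
      fix u t v assume uvt: "a \<le> u \<and> u \<le> t \<and> t \<le> v \<and> v \<le> b \<and> v - u < r / (K + 1)"
      have "\<Phi> v - \<Phi> u = \<phi> v * G v - \<phi> u * G u - integral {u..v} (\<lambda>s. G s * \<phi>' s)"
        using integral_upto_diff[OF int, of u v] uvt unfolding \<Phi>_def by simp
      moreover have "K * (v - u) \<le> r"
      proof -
        have "K * (v - u) \<le> (K + 1) * (r / (K + 1))"
          using uvt K(1) by (intro mult_mono) auto
        then show ?thesis using K(1) by simp
      qed
      moreover have "G u \<le> G v" using uvt G by (auto intro: mono_onD)
      ultimately show "\<bar>\<phi> t * (G v - G u) - (\<Phi> v - \<Phi> u)\<bar> \<le> r * (G v - G u)"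
        using parts_local_error_mono[OF G \<phi> \<phi>' K(2), of u t v] uvt
        by (smt (verit) mult_right_mono)
    qed
  qed
  moreover have "\<Phi> b - \<Phi> a = \<phi> b * G b - \<phi> a * G a - integral {a..b} (\<lambda>s. G s * \<phi>' s)"
    unfolding \<Phi>_def by simp
  ultimately show ?thesis by simp
qed

lemma has_RS_integral_parts:
  assumes ab: "a \<le> b" and G: "bounded_variation_on G a b"
    and \<phi>: "\<And>x. (\<phi> has_real_derivative \<phi>' x) (at x)" and \<phi>': "continuous_on {a..b} \<phi>'"
  shows "has_RS_integral \<phi> G a b (\<phi> b * G b - \<phi> a * G a - integral {a..b} (\<lambda>s. G s * \<phi>' s))"
proof -
  obtain P Q where PQ: "mono_on {a..b} P" "mono_on {a..b} Q" "G = (\<lambda>x. P x - Q x)"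
    using bounded_variation_Jordan_decomposition[OF G] by blast
  have I: "integral {a..b} (\<lambda>s. P s * \<phi>' s - Q s * \<phi>' s)
      = integral {a..b} (\<lambda>s. P s * \<phi>' s) - integral {a..b} (\<lambda>s. Q s * \<phi>' s)"
    by (intro integral_diff mono_mult_continuous_integrable PQ \<phi>')
  have "has_RS_integral \<phi> (\<lambda>x. P x - Q x) a b
      ((\<phi> b * P b - \<phi> a * P a - integral {a..b} (\<lambda>s. P s * \<phi>' s))
     - (\<phi> b * Q b - \<phi> a * Q a - integral {a..b} (\<lambda>s. Q s * \<phi>' s)))"
    by (intro has_RS_integral_diff has_RS_integral_parts_mono ab PQ \<phi> \<phi>')
  moreover have "\<phi> b * G b - \<phi> a * G a - integral {a..b} (\<lambda>s. G s * \<phi>' s)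
      = (\<phi> b * P b - \<phi> a * P a - integral {a..b} (\<lambda>s. P s * \<phi>' s))
      - (\<phi> b * Q b - \<phi> a * Q a - integral {a..b} (\<lambda>s. Q s * \<phi>' s))"
    unfolding PQ(3) left_diff_distrib I by (simp add: algebra_simps)
  ultimately show ?thesis unfolding PQ(3) by simp
qed

lemma integral_upto_lipschitz:
  fixes G :: "real \<Rightarrow> real"
  assumes G: "G integrable_on {a..b}" "\<And>x. x \<in> {a..b} \<Longrightarrow> \<bar>G x\<bar> \<le> C"
    and xy: "x \<in> {a..b}" "y \<in> {a..b}"
  shows "\<bar>integral {a..y} G - integral {a..x} G\<bar> \<le> C * \<bar>y - x\<bar>"
proof -
  have *: "\<bar>integral {a..q} G - integral {a..p} G\<bar> \<le> C * (q - p)"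
    if "p \<in> {a..b}" "q \<in> {a..b}" "p \<le> q" for p q
  proof -
    have "\<bar>integral {p..q} (\<lambda>s. G s * 1)\<bar> \<le> C * 1 * (q - p)"
      using that G by (intro integral_mult_abs_le) (auto intro: integrable_on_subinterval)
    then show ?thesis using integral_upto_diff[OF G(1), of p q] that by simp
  qed
  show ?thesis
    using *[OF xy] *[OF xy(2,1)] by (cases "x \<le> y") (auto simp: abs_minus_commute)
qed

lemma indefinite_integral_local_error:
  fixes G \<phi> :: "real \<Rightarrow> real"
  assumes G: "G integrable_on {u..v}" "(\<lambda>s. G s * \<phi> s) integrable_on {u..v}" "u \<le> v"
    and bounds: "\<And>s. s \<in> {u..v} \<Longrightarrow> \<bar>G s\<bar> \<le> C" "\<And>s. s \<in> {u..v} \<Longrightarrow> \<bar>\<phi> t - \<phi> s\<bar> \<le> e"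
  shows "\<bar>\<phi> t * integral {u..v} G - integral {u..v} (\<lambda>s. G s * \<phi> s)\<bar> \<le> C * e * (v - u)"
proof -
  have "\<phi> t * integral {u..v} G - integral {u..v} (\<lambda>s. G s * \<phi> s) = integral {u..v} (\<lambda>s. G s * (\<phi> t - \<phi> s))"
    unfolding right_diff_distrib using G(1,2)
    by (simp add: integral_diff integrable_on_mult_left integral_mult_left mult.commute)
  also have "\<bar>\<dots>\<bar> \<le> C * e * (v - u)"
  proof (rule integral_mult_abs_le)
    show "(\<lambda>s. G s * (\<phi> t - \<phi> s)) integrable_on {u..v}"
      unfolding right_diff_distrib using G(1,2) by (intro integrable_diff integrable_on_mult_left) auto
  qed (use G(3) bounds in auto)
  finally show ?thesis .
qed

lemma has_RS_integral_indefinite_integral: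
  fixes G \<phi> :: "real \<Rightarrow> real"
  assumes ab: "a \<le> b" and G: "G integrable_on {a..b}" "\<And>x. x \<in> {a..b} \<Longrightarrow> \<bar>G x\<bar> \<le> C"
    and \<phi>: "continuous_on {a..b} \<phi>" and G\<phi>: "(\<lambda>s. G s * \<phi> s) integrable_on {a..b}"
  shows "has_RS_integral \<phi> (\<lambda>x. integral {a..x} G) a b (integral {a..b} (\<lambda>s. G s * \<phi> s))"
proof -
  have "C \<ge> 0" using G(2)[of a] ab by fastforce
  define \<Phi> where "\<Phi> x = integral {a..x} (\<lambda>s. G s * \<phi> s)" for x
  have "has_RS_integral \<phi> (\<lambda>x. integral {a..x} G) a b (\<Phi> b - \<Phi> a)"
  proof (rule has_RS_integral_localI[OF ab, of "\<lambda>x. x"])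
    show "mono_on {a..b} (\<lambda>x. x)" by (rule mono_onI)
    fix r :: real assume "r > 0"
    then have "r / (C + 1) > 0" using \<open>C \<ge> 0\<close> by simp
    then obtain d where d: "d > 0"
      and d\<phi>: "\<forall>s\<in>{a..b}. \<forall>s'\<in>{a..b}. dist s' s < d \<longrightarrow> dist (\<phi> s') (\<phi> s) < r / (C + 1)"
      using compact_uniformly_continuous[OF \<phi> compact_Icc] unfolding uniformly_continuous_on_def by metis
    show "\<exists>d>0. \<forall>u t v. a \<le> u \<and> u \<le> t \<and> t \<le> v \<and> v \<le> b \<and> v - u < d \<longrightarrow>
        \<bar>\<phi> t * (integral {a..v} G - integral {a..u} G) - (\<Phi> v - \<Phi> u)\<bar> \<le> r * (v - u)"
    proof (intro exI[of _ d] conjI allI impI d)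
      fix u t v assume uvt: "a \<le> u \<and> u \<le> t \<and> t \<le> v \<and> v \<le> b \<and> v - u < d"
      have "\<bar>\<phi> t - \<phi> s\<bar> \<le> r / (C + 1)" if "s \<in> {u..v}" for s
      proof -
        have "s \<in> {a..b}" "t \<in> {a..b}" "dist t s < d" using that uvt by (auto simp: dist_real_def)
        then show ?thesis using d\<phi> by (fastforce simp: dist_real_def)
      qed
      then have "\<bar>\<phi> t * integral {u..v} G - integral {u..v} (\<lambda>s. G s * \<phi> s)\<bar> \<le> C * (r / (C + 1)) * (v - u)"
        using G G\<phi> uvt by (intro indefinite_integral_local_error) (auto intro: integrable_on_subinterval)
      also have "\<dots> \<le> r * (v - u)"
        using \<open>C \<ge> 0\<close> \<open>r > 0\<close> uvt by (intro mult_right_mono) (auto simp: field_simps)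
      finally show "\<bar>\<phi> t * (integral {a..v} G - integral {a..u} G) - (\<Phi> v - \<Phi> u)\<bar> \<le> r * (v - u)"
        using integral_upto_diff[OF G(1), of u v] integral_upto_diff[OF G\<phi>, of u v] uvt
        unfolding \<Phi>_def by simp
    qed
  qed
  then show ?thesis by (simp add: \<Phi>_def)
qed

section \<open>Iterated integrals\<close>

lemma J_Suc_eq: "J (Suc k) F a = (\<lambda>x. integral {a..x} (J k F a))"
  by (rule ext) simp

lemma J_1_eq: "J 1 F a x = integral {a..x} F"
proof -
  have "J 0 F a = F" by (rule ext) simp
  then show ?thesis by simp
qed

lemma bounded_variation_J:
  assumes "bounded_variation_on F a b"
  shows "bounded_variation_on (J k F a) a b"
proof (induction k)
  case (Suc k)
  obtain C where C: "\<And>x. x \<in> {a..b} \<Longrightarrow> \<bar>J k F a x\<bar> \<le> C"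
    using bounded_variation_bounded[OF Suc.IH] by blast
  show ?case unfolding J_Suc_eq
    by (rule lipschitz_bounded_variation)
      (rule integral_upto_lipschitz[OF bounded_variation_integrable[OF Suc.IH] C])
qed (simp add: assms)

lemma continuous_on_J: "bounded_variation_on F a b \<Longrightarrow> continuous_on {a..b} (J (Suc k) F a)"
  unfolding J_Suc_eq
  by (intro indefinite_integral_continuous_1 bounded_variation_integrable bounded_variation_J)

lemma J_diff:
  assumes "bounded_variation_on F a b" "bounded_variation_on G a b" "x \<in> {a..b}"
  shows "J k (\<lambda>x. F x - G x) a x = J k F a x - J k G a x"
  using assms(3)
proof (induction k arbitrary: x)
  case (Suc k)
  have "{a..x} \<subseteq> {a..b}" using Suc.prems by auto
  then have "J k F a integrable_on {a..x}" "J k G a integrable_on {a..x}"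
    using bounded_variation_integrable[OF bounded_variation_J[OF assms(1)]]
      bounded_variation_integrable[OF bounded_variation_J[OF assms(2)]]
    by (blast intro: integrable_on_subinterval)+
  moreover have "J (Suc k) (\<lambda>x. F x - G x) a x = integral {a..x} (\<lambda>s. J k F a s - J k G a s)"
    using Suc.IH Suc.prems by (simp, intro integral_cong) auto
  ultimately show ?case by (simp add: integral_diff)
qed simp

lemma integral_J_mult_parts:
  assumes F: "bounded_variation_on F a b" and ab: "a \<le> b"
    and \<phi>: "\<And>x. (\<phi> has_real_derivative \<phi>' x) (at x)" and \<phi>': "continuous_on {a..b} \<phi>'"
  shows "integral {a..b} (\<lambda>s. J k F a s * \<phi> s)
       = \<phi> b * J (Suc k) F a b - integral {a..b} (\<lambda>s. J (Suc k) F a s * \<phi>' s)"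
proof -
  have Jk: "bounded_variation_on (J k F a) a b" using bounded_variation_J[OF F] .
  obtain C where C: "\<And>x. x \<in> {a..b} \<Longrightarrow> \<bar>J k F a x\<bar> \<le> C"
    using bounded_variation_bounded[OF Jk] by blast
  have "continuous_on {a..b} \<phi>"
    using \<phi> by (meson DERIV_isCont continuous_at_imp_continuous_on)
  then have "has_RS_integral \<phi> (J (Suc k) F a) a b (integral {a..b} (\<lambda>s. J k F a s * \<phi> s))"
    unfolding J_Suc_eq
    by (intro has_RS_integral_indefinite_integral[OF ab bounded_variation_integrable[OF Jk] C]
          bounded_variation_mult_continuous_integrable[OF Jk])
  moreover have "has_RS_integral \<phi> (J (Suc k) F a) a b
      (\<phi> b * J (Suc k) F a b - \<phi> a * J (Suc k) F a a - integral {a..b} (\<lambda>s. J (Suc k) F a s * \<phi>' s))"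
    by (rule has_RS_integral_parts[OF ab bounded_variation_J[OF F] \<phi> \<phi>'])
  ultimately show ?thesis using has_RS_integral_unique[OF ab] by fastforce
qed

lemma has_RS_integral_J_expansion:
  assumes H: "bounded_variation_on H a b" and ab: "a \<le> b" and Ha: "H a = 0"
    and D: "\<And>k x. k \<le> r \<Longrightarrow> (D k has_real_derivative D (Suc k) x) (at x)"
    and D_cont: "continuous_on {a..b} (D (Suc r))"
  shows "has_RS_integral (D 0) H a b
     ((\<Sum>k\<le>r. (-1)^k * D k b * J k H a b) + (-1)^Suc r * integral {a..b} (\<lambda>s. J r H a s * D (Suc r) s))"
  using D D_cont
proof (induction r)
  case 0
  then show ?case using has_RS_integral_parts[OF ab H, of "D 0" "D 1"] Ha by simp
next
  case (Suc r)
  have "continuous_on {a..b} (D (Suc r))"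
    using Suc.prems(1)[of "Suc r"] by (meson DERIV_isCont continuous_at_imp_continuous_on order_refl)
  then have IH: "has_RS_integral (D 0) H a b
     ((\<Sum>k\<le>r. (-1)^k * D k b * J k H a b) + (-1)^Suc r * integral {a..b} (\<lambda>s. J r H a s * D (Suc r) s))"
    using Suc by simp
  have parts: "integral {a..b} (\<lambda>s. J r H a s * D (Suc r) s)
      = D (Suc r) b * J (Suc r) H a b - integral {a..b} (\<lambda>s. J (Suc r) H a s * D (Suc (Suc r)) s)"
    using Suc.prems by (intro integral_J_mult_parts[OF H ab]) auto
  have "(\<Sum>k\<le>r. (-1)^k * D k b * J k H a b) + (-1)^Suc r * integral {a..b} (\<lambda>s. J r H a s * D (Suc r) s)
      = (\<Sum>k\<le>Suc r. (-1)^k * D k b * J k H a b)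
        + (-1)^Suc (Suc r) * integral {a..b} (\<lambda>s. J (Suc r) H a s * D (Suc (Suc r)) s)"
    unfolding parts by (simp add: algebra_simps del: J.simps)
  then show ?case using IH by (simp only:)
qed

section \<open>Bernstein polynomials and forward differences\<close>

fun forward_diff :: "nat \<Rightarrow> (nat \<Rightarrow> real) \<Rightarrow> nat \<Rightarrow> real" where
  "forward_diff 0 c k = c k"
| "forward_diff (Suc j) c k = forward_diff j c (Suc k) - forward_diff j c k"

lemma forward_diff_eq_sum: "forward_diff j c k = (\<Sum>i\<le>j. (-1)^(j-i) * real (j choose i) * c (k+i))"
proof (induction j arbitrary: k)
  case 0 then show ?case by simp
next
  case (Suc j)
  define g where "g = (\<lambda>i. (-1::real)^(Suc j - i) * real (j choose i) * c (k+i))"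
  have pascal: "(\<Sum>i\<le>Suc j. (-1)^(Suc j-i) * real (Suc j choose i) * c (k+i))
     = (-1)^(Suc j) * c k + (\<Sum>i\<le>j. (-1)^(j-i) * real (j choose i) * c (k + Suc i))
        + (\<Sum>i\<le>j. (-1)^(j-i) * real (j choose Suc i) * c (k + Suc i))"
    unfolding sum.atMost_Suc_shift by (simp add: sum.distrib algebra_simps)
  have regroup: "(-1)^(Suc j) * c k + (\<Sum>i\<le>j. (-1)^(j-i) * real (j choose Suc i) * c (k + Suc i))
      = (\<Sum>i\<le>Suc j. g i)"
    unfolding sum.atMost_Suc_shift g_def by simp
  have reindex: "(\<Sum>i\<le>Suc j. g i) = - (\<Sum>i\<le>j. (-1)^(j-i) * real (j choose i) * c (k+i))"
  proof -
    have "(\<Sum>i\<le>Suc j. g i) = (\<Sum>i\<le>j. g i)" by (simp add: g_def)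
    also have "\<dots> = (\<Sum>i\<le>j. - ((-1)^(j-i) * real (j choose i) * c (k+i)))"
      by (intro sum.cong) (auto simp: g_def Suc_diff_le)
    finally show ?thesis by (simp add: sum_negf)
  qed
  have "forward_diff (Suc j) c k = (\<Sum>i\<le>j. (-1)^(j-i) * real (j choose i) * c (k + Suc i))
        - (\<Sum>i\<le>j. (-1)^(j-i) * real (j choose i) * c (k+i))"
    using Suc.IH[of "Suc k"] Suc.IH[of k] by simp
  also have "\<dots> = (\<Sum>i\<le>Suc j. (-1)^(Suc j-i) * real (Suc j choose i) * c (k+i))"
    unfolding pascal using regroup reindex by simp
  finally show ?case .
qed

lemma prod_Suc_minus_eq_fact: "(\<Prod>j\<le>N. real (Suc N) - real j) = fact (Suc N)"
proof -
  have "fact (Suc N) = (of_nat (\<Prod>i = 0..<Suc N. Suc N - i) :: real)" by (rule fact_prod_rev)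
  also have "\<dots> = (\<Prod>i = 0..<Suc N. real (Suc N - i))" by simp
  also have "\<dots> = (\<Prod>j\<le>N. real (Suc N) - real j)"
    by (intro prod.cong) (auto simp: of_nat_diff)
  finally show ?thesis by simp
qed

lemma prod_node_diffs_eq: "i \<le> N \<Longrightarrow> (\<Prod>j\<in>{..N} - {i}. real i - real j) = (-1)^(N-i) * fact i * fact (N-i)"
proof (induction N arbitrary: i)
  case 0 then show ?case by simp
next
  case (Suc N)
  show ?case
  proof (cases "i = Suc N")
    case True
    have "{..Suc N} - {i} = {..N}" using True by auto
    then show ?thesis using True prod_Suc_minus_eq_fact by simp
  next
    case False
    then have iN: "i \<le> N" using Suc.prems by simp
    have "{..Suc N} - {i} = insert (Suc N) ({..N} - {i})" using iN by auto
    then have "(\<Prod>j\<in>{..Suc N} - {i}. real i - real j) = (real i - real (Suc N)) * (\<Prod>j\<in>{..N} - {i}. real i - real j)"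
      by simp
    also have "\<dots> = (real i - real (Suc N)) * ((-1)^(N-i) * fact i * fact (N-i))" using Suc.IH[OF iN] by simp
    also have "\<dots> = (-1)^(Suc N - i) * fact i * fact (Suc N - i)"
    proof -
      have e: "Suc N - i = Suc (N - i)" using iN by simp
      show ?thesis unfolding e using iN by (simp add: of_nat_diff algebra_simps)
    qed
    finally show ?thesis .
  qed
qed

lemma divided_diff_equispaced:
  assumes h: "h \<noteq> 0" and x: "\<And>i. x i = p + real i * h"
  shows "divided_diff N x f = (\<Sum>i\<le>N. (-1)^(N-i) * real (N choose i) * f (x i)) / (h^N * fact N)"
proof -
  have tm: "f (x i) / (\<Prod>j\<in>{..N} - {i}. x i - x j) = (-1)^(N-i) * real (N choose i) * f (x i) / (h^N * fact N)"
    if i: "i \<le> N" for i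
  proof -
    have "(\<Prod>j\<in>{..N} - {i}. x i - x j) = (\<Prod>j\<in>{..N} - {i}. h * (real i - real j))"
      by (intro prod.cong) (auto simp: x algebra_simps)
    also have "\<dots> = h ^ card ({..N} - {i}) * (\<Prod>j\<in>{..N} - {i}. real i - real j)"
      by (simp add: prod.distrib)
    also have "card ({..N} - {i}) = N" using i by simp
    also have "(\<Prod>j\<in>{..N} - {i}. real i - real j) = (-1)^(N-i) * fact i * fact (N-i)" using prod_node_diffs_eq[OF i] .
    finally have pr: "(\<Prod>j\<in>{..N} - {i}. x i - x j) = h^N * ((-1)^(N-i) * fact i * fact (N-i))" .
    have bin: "real (N choose i) = fact N / (fact i * fact (N - i))" using binomial_fact[OF i] by simp
    have s: "((-1::real)^(N-i)) * (-1)^(N-i) = 1" by (simp add: power_mult_distrib[symmetric])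
    show ?thesis unfolding pr bin using h s
      by (simp add: field_simps)
  qed
  show ?thesis unfolding divided_diff_def
    by (simp add: tm sum_divide_distrib)
qed

definition grid_values :: "(real \<Rightarrow> real) \<Rightarrow> real \<Rightarrow> real \<Rightarrow> nat \<Rightarrow> nat \<Rightarrow> real" where
  "grid_values f a b m k = f (a + real k * ((b - a) / m))"

lemma forward_diff_nonneg_if_n_convex:
  assumes conv: "n_convex_on n {a..b} f" and ab: "a < b" and m: "m > 0" and km: "k + Suc n \<le> m"
  shows "forward_diff (Suc n) (grid_values f a b m) k \<ge> 0"
proof -
  define h where "h = (b - a) / m"
  have h: "h > 0" unfolding h_def using ab m by simp
  define x where "x = (\<lambda>i. (a + real k * h) + real i * h)"
  have xin: "x i \<in> {a..b}" if "i \<le> Suc n" for i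
  proof -
    have "x i = a + real (k + i) * h" unfolding x_def by (simp add: algebra_simps)
    moreover have "real (k + i) * h \<le> real m * h" using km that h by (intro mult_right_mono) auto
    moreover have "real m * h = b - a" unfolding h_def using m by simp
    ultimately show ?thesis using h by (auto intro: mult_nonneg_nonneg)
  qed
  have inj: "inj_on x {..n+1}" unfolding x_def inj_on_def using h by auto
  have dd: "divided_diff (n+1) x f \<ge> 0" using conv xin inj unfolding n_convex_on_def by auto
  have "divided_diff (Suc n) x f = (\<Sum>i\<le>Suc n. (-1)^(Suc n-i) * real (Suc n choose i) * f (x i)) / (h^Suc n * fact (Suc n))"
    by (rule divided_diff_equispaced) (use h in \<open>auto simp: x_def\<close>)
  also have "(\<Sum>i\<le>Suc n. (-1)^(Suc n-i) * real (Suc n choose i) * f (x i)) = forward_diff (Suc n) (grid_values f a b m) k"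
    unfolding forward_diff_eq_sum grid_values_def h_def[symmetric] x_def by (intro sum.cong) (auto simp: algebra_simps)
  finally have "forward_diff (Suc n) (grid_values f a b m) k = divided_diff (Suc n) x f * (h^Suc n * fact (Suc n))" using h by simp
  then show ?thesis using dd h by simp
qed

definition bernstein_basis :: "real \<Rightarrow> real \<Rightarrow> nat \<Rightarrow> nat \<Rightarrow> real \<Rightarrow> real" where
  "bernstein_basis a b M k t = real (M choose k) * (t - a)^k * (b - t)^(M - k)"

lemma has_real_derivative_bernstein_basis:
  "((bernstein_basis a b M k) has_real_derivative real (M choose k) * (real k * (t-a)^(k-1) * (b-t)^(M-k)
       - (t-a)^k * (real (M-k) * (b-t)^(M-k-1)))) (at t)"
proof -
  have d1: "((\<lambda>t. (t - a)^k) has_real_derivative real k * (t - a)^(k - 1)) (at t)"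
    by (rule DERIV_cong[OF DERIV_power[OF DERIV_diff[OF DERIV_ident DERIV_const]]]) simp
  have d2: "((\<lambda>t. (b - t)^(M-k)) has_real_derivative - (real (M-k) * (b - t)^(M-k-1))) (at t)"
    by (rule DERIV_cong[OF DERIV_power[OF DERIV_diff[OF DERIV_const DERIV_ident]]]) simp
  have "((\<lambda>t. real (M choose k) * ((t - a)^k * (b - t)^(M - k))) has_real_derivative
      real (M choose k) * (real k * (t - a)^(k - 1) * (b - t)^(M - k) + (t - a)^k * - (real (M-k) * (b - t)^(M-k-1)))) (at t)"
    by (intro DERIV_cmult DERIV_cong[OF DERIV_mult[OF d1 d2]]) simp
  then show ?thesis unfolding bernstein_basis_def by (simp add: algebra_simps)
qed

lemma has_real_derivative_bernstein_basis_Suc: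
  "((bernstein_basis a b (Suc M) k) has_real_derivative
     real (Suc M) * ((if k = 0 then 0 else bernstein_basis a b M (k - 1) t) - bernstein_basis a b M k t)) (at t)"
proof (cases k)
  case 0
  show ?thesis
    by (rule DERIV_cong[OF has_real_derivative_bernstein_basis]) (simp add: 0 bernstein_basis_def)
next
  case (Suc j)
  have e1: "real (Suc M choose Suc j) * real (Suc j) = real (Suc M) * real (M choose j)"
    using Suc_times_binomial[of j M] by (metis of_nat_mult mult.commute)
  have e2: "real (Suc M choose Suc j) * real (M - j) = real (Suc M) * real (M choose Suc j)"
    using binomial_absorb_comp[of "Suc M" "Suc j"] by (metis of_nat_mult mult.commute diff_Suc_Suc diff_Suc_1)
  have e3: "M - j - 1 = M - Suc j" by simp
  have "real (Suc M choose k) * (real k * (t - a) ^ (k - 1) * (b - t) ^ (Suc M - k) -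
        (t - a) ^ k * (real (Suc M - k) * (b - t) ^ (Suc M - k - 1)))
      = (real (Suc M choose Suc j) * real (Suc j)) * ((t - a) ^ j * (b - t) ^ (M - j))
        - (real (Suc M choose Suc j) * real (M - j)) * ((t - a) ^ Suc j * (b - t) ^ (M - Suc j))"
    unfolding Suc by (simp add: e3 algebra_simps)
  also have "\<dots> = real (Suc M) * ((if k = 0 then 0 else bernstein_basis a b M (k - 1) t) - bernstein_basis a b M k t)"
    unfolding e1 e2 Suc bernstein_basis_def by (simp add: algebra_simps)
  finally show ?thesis by (rule DERIV_cong[OF has_real_derivative_bernstein_basis])
qed

lemma bernstein_basis_eq_0: "k > M \<Longrightarrow> bernstein_basis a b M k t = 0"
  unfolding bernstein_basis_def by simp

lemma has_real_derivative_bernstein_sum: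
  "((\<lambda>t. \<Sum>k\<le>Suc M. c k * bernstein_basis a b (Suc M) k t) has_real_derivative
     real (Suc M) * (\<Sum>k\<le>M. (c (Suc k) - c k) * bernstein_basis a b M k t)) (at t)"
proof -
  have s1: "(\<Sum>k\<le>Suc M. c k * (if k = 0 then 0 else bernstein_basis a b M (k - 1) t)) = (\<Sum>k\<le>M. c (Suc k) * bernstein_basis a b M k t)"
    unfolding sum.atMost_Suc_shift by simp
  have s2: "(\<Sum>k\<le>Suc M. c k * bernstein_basis a b M k t) = (\<Sum>k\<le>M. c k * bernstein_basis a b M k t)"
    by (simp add: bernstein_basis_eq_0)
  have "(\<Sum>k\<le>Suc M. c k * (real (Suc M) * ((if k = 0 then 0 else bernstein_basis a b M (k - 1) t) - bernstein_basis a b M k t)))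
      = real (Suc M) * ((\<Sum>k\<le>Suc M. c k * (if k = 0 then 0 else bernstein_basis a b M (k - 1) t)) - (\<Sum>k\<le>Suc M. c k * bernstein_basis a b M k t))"
    by (simp add: sum_distrib_left sum_subtractf algebra_simps)
  also have "\<dots> = real (Suc M) * (\<Sum>k\<le>M. (c (Suc k) - c k) * bernstein_basis a b M k t)"
    unfolding s1 s2 by (simp add: sum_subtractf[symmetric] left_diff_distrib)
  finally show ?thesis
    by (intro DERIV_cong[OF DERIV_sum[OF DERIV_cmult[OF has_real_derivative_bernstein_basis_Suc]]])
qed

text \<open>The classical formula for the \<open>j\<close>-th derivative of the Bernstein polynomial of degree \<open>m\<close> on
  \<open>[a,b]\<close> with coefficients \<open>c\<close>, in terms of the forward differences of \<open>c\<close>.\<close>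

definition bernstein_deriv :: "real \<Rightarrow> real \<Rightarrow> nat \<Rightarrow> (nat \<Rightarrow> real) \<Rightarrow> nat \<Rightarrow> real \<Rightarrow> real" where
  "bernstein_deriv a b m c j t = fact m / fact (m - j) / (b - a)^m * (\<Sum>k\<le>m-j. forward_diff j c k * bernstein_basis a b (m-j) k t)"

lemma has_real_derivative_bernstein_deriv:
  assumes "j < m" and ab: "a < b"
  shows "((bernstein_deriv a b m c j) has_real_derivative bernstein_deriv a b m c (Suc j) t) (at t)"
proof -
  define M where "M = m - Suc j"
  have mj: "m - j = Suc M" unfolding M_def using assms by simp
  have d: "((\<lambda>t. \<Sum>k\<le>Suc M. forward_diff j c k * bernstein_basis a b (Suc M) k t) has_real_derivative
     real (Suc M) * (\<Sum>k\<le>M. forward_diff (Suc j) c k * bernstein_basis a b M k t)) (at t)"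
    using has_real_derivative_bernstein_sum[where M=M and c="forward_diff j c" and a=a and b=b and t=t] by simp
  have "((bernstein_deriv a b m c j) has_real_derivative
      fact m / fact (m - j) / (b - a)^m * (real (Suc M) * (\<Sum>k\<le>M. forward_diff (Suc j) c k * bernstein_basis a b M k t))) (at t)"
    unfolding bernstein_deriv_def mj by (rule DERIV_cmult[OF d])
  moreover have "fact m / fact (m - j) / (b - a)^m * (real (Suc M) * (\<Sum>k\<le>M. forward_diff (Suc j) c k * bernstein_basis a b M k t))
      = bernstein_deriv a b m c (Suc j) t"
  proof -
    have mm: "m - Suc j = M" unfolding M_def by simp
    have e: "fact m / fact (Suc M) / (b - a)^m * (real (Suc M) * X) = fact m / fact M / (b - a)^m * X" for X :: real
      using ab by (simp add: fact_Suc field_simps del: of_nat_Suc)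
    show ?thesis unfolding mj e unfolding bernstein_deriv_def mm ..
  qed
  ultimately show ?thesis by simp
qed

lemma continuous_on_bernstein_deriv: "continuous_on S (bernstein_deriv a b m c j)"
  unfolding bernstein_deriv_def bernstein_basis_def by (intro continuous_intros)

lemma bernstein_basis_nonneg: "t \<in> {a..b} \<Longrightarrow> bernstein_basis a b M k t \<ge> 0"
  unfolding bernstein_basis_def by auto

lemma bernstein_deriv_nonneg_if_n_convex:
  assumes conv: "n_convex_on n {a..b} f" and ab: "a < b" and m: "Suc n \<le> m" and t: "t \<in> {a..b}"
  shows "bernstein_deriv a b m (grid_values f a b m) (Suc n) t \<ge> 0"
  unfolding bernstein_deriv_def
proof (intro mult_nonneg_nonneg sum_nonneg)
  fix k assume k: "k \<in> {..m - Suc n}"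
  show "forward_diff (Suc n) (grid_values f a b m) k \<ge> 0"
    by (rule forward_diff_nonneg_if_n_convex[OF conv ab]) (use m k in auto)
  show "bernstein_basis a b (m - Suc n) k t \<ge> 0" using bernstein_basis_nonneg[OF t] .
qed (use ab in auto)

lemma bernstein_deriv_0_eq:
  assumes "a < b"
  shows "bernstein_deriv a b m c 0 t = (\<Sum>k\<le>m. c k * Bernstein m k ((t - a) / (b - a)))"
proof -
  have "bernstein_deriv a b m c 0 t = (\<Sum>k\<le>m. c k * (bernstein_basis a b m k t / (b - a)^m))"
    unfolding bernstein_deriv_def by (simp add: sum_divide_distrib)
  also have "\<dots> = (\<Sum>k\<le>m. c k * Bernstein m k ((t - a) / (b - a)))"
  proof (intro sum.cong refl)
    fix k assume k: "k \<in> {..m}"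
    have e: "1 - (t - a) / (b - a) = (b - t) / (b - a)" using assms by (simp add: field_simps)
    have "(b - a)^m = (b - a)^k * (b - a)^(m - k)" using k by (simp add: power_add[symmetric])
    then show "c k * (bernstein_basis a b m k t / (b - a)^m) = c k * Bernstein m k ((t - a) / (b - a))"
      unfolding Bernstein_def bernstein_basis_def e using assms by (simp add: power_divide field_simps)
  qed
  finally show ?thesis .
qed

lemma bernstein_uniform_approx:
  assumes cont: "continuous_on {a..b} f" and ab: "a < b" and e: "e > 0"
  shows "\<exists>N. \<forall>m\<ge>N. \<forall>x\<in>{a..b}. \<bar>f x - bernstein_deriv a b m (grid_values f a b m) 0 x\<bar> < e"
proof -
  define g where "g = (\<lambda>s. f (a + s * (b - a)))"
  have "continuous_on {0..1} g" unfolding g_def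
  proof (rule continuous_on_compose2[OF cont])
    show "continuous_on {0..1} (\<lambda>s. a + s * (b - a))" by (intro continuous_intros)
    have "0 \<le> s * (b - a) \<and> s * (b - a) \<le> b - a" if "s \<in> {0..1}" for s
      using that ab by (auto intro: mult_left_le_one_le)
    then show "(\<lambda>s. a + s * (b - a)) ` {0..1} \<subseteq> {a..b}"
      unfolding image_subset_iff by (smt (verit) atLeastAtMost_iff)
  qed
  from Bernstein_Weierstrass[OF this e] obtain N where
    N: "\<And>m x. N \<le> m \<Longrightarrow> x \<in> {0..1} \<Longrightarrow> \<bar>g x - (\<Sum>k\<le>m. g (real k / real m) * Bernstein m k x)\<bar> < e"
    by blast
  show ?thesis
  proof (intro exI[of _ N] allI impI ballI)
    fix m x assume m: "N \<le> m" and x: "x \<in> {a..b}"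
    define s where "s = (x - a) / (b - a)"
    have s01: "s \<in> {0..1}" unfolding s_def using x ab by (auto simp: field_simps)
    have gs: "g s = f x" unfolding g_def s_def using ab by simp
    have gk: "g (real k / real m) = grid_values f a b m k" for k unfolding g_def grid_values_def by (simp add: field_simps)
    have "bernstein_deriv a b m (grid_values f a b m) 0 x = (\<Sum>k\<le>m. grid_values f a b m k * Bernstein m k s)"
      unfolding bernstein_deriv_0_eq[OF ab] s_def ..
    then show "\<bar>f x - bernstein_deriv a b m (grid_values f a b m) 0 x\<bar> < e"
      using N[OF m s01] unfolding gs gk by simp
  qed
qed

lemma bernstein_approx_sequence:
  assumes cont: "continuous_on {a..b} f" and ab: "a < b"
  obtains ms where "\<And>k. ms k \<ge> N0" "\<And>k x. x \<in> {a..b} \<Longrightarrow> \<bar>f x - bernstein_deriv a b (ms k) (grid_values f a b (ms k)) 0 x\<bar> \<le> 1 / (real k + 1)"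
proof -
  have "\<forall>k. \<exists>m. m \<ge> N0 \<and> (\<forall>x\<in>{a..b}. \<bar>f x - bernstein_deriv a b m (grid_values f a b m) 0 x\<bar> \<le> 1 / (real k + 1))"
  proof
    fix k
    obtain N where N: "\<forall>m\<ge>N. \<forall>x\<in>{a..b}. \<bar>f x - bernstein_deriv a b m (grid_values f a b m) 0 x\<bar> < 1 / (real k + 1)"
      using bernstein_uniform_approx[OF cont ab, of "1 / (real k + 1)"] by auto
    show "\<exists>m. m \<ge> N0 \<and> (\<forall>x\<in>{a..b}. \<bar>f x - bernstein_deriv a b m (grid_values f a b m) 0 x\<bar> \<le> 1 / (real k + 1))"
      by (intro exI[of _ "max N N0"]) (use N in \<open>fastforce intro: less_imp_le\<close>)
  qed
  then obtain ms where "\<forall>k. ms k \<ge> N0 \<and> (\<forall>x\<in>{a..b}. \<bar>f x - bernstein_deriv a b (ms k) (grid_values f a b (ms k)) 0 x\<bar> \<le> 1 / (real k + 1))"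
    by metis
  then show ?thesis using that by blast
qed

lemma LIMSEQ_inverse_Suc: "(\<lambda>k. 1 / (real k + 1)) \<longlonglongrightarrow> 0"
  using LIMSEQ_inverse_real_of_nat by (simp add: inverse_eq_divide add.commute)

lemma has_RS_integral_exists:
  assumes cont: "continuous_on {a..b} f" and ab: "a < b" and bv: "bounded_variation_on F a b"
  shows "\<exists>I. has_RS_integral f F a b I"
proof -
  obtain ms where ms: "\<And>k. ms k \<ge> 1" "\<And>k x. x \<in> {a..b} \<Longrightarrow> \<bar>f x - bernstein_deriv a b (ms k) (grid_values f a b (ms k)) 0 x\<bar> \<le> 1 / (real k + 1)"
    using bernstein_approx_sequence[OF cont ab, of 1] by blast
  define g where "g = (\<lambda>k. bernstein_deriv a b (ms k) (grid_values f a b (ms k)) 0)"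
  have "\<forall>k. \<exists>I. has_RS_integral (g k) F a b I"
  proof
    fix k
    have "has_RS_integral (g k) F a b (g k b * F b - g k a * F a - integral {a..b} (\<lambda>s. F s * bernstein_deriv a b (ms k) (grid_values f a b (ms k)) (Suc 0) s))"
      unfolding g_def
      by (rule has_RS_integral_parts[OF _ bv has_real_derivative_bernstein_deriv continuous_on_bernstein_deriv]) (use ab ms(1)[of k] in auto)
    then show "\<exists>I. has_RS_integral (g k) F a b I" by blast
  qed
  then obtain I where I: "\<And>k. has_RS_integral (g k) F a b (I k)" by metis
  have "\<exists>L. has_RS_integral f F a b L \<and> I \<longlonglongrightarrow> L"
    by (rule has_RS_integral_uniform_limit[OF _ bv I _ LIMSEQ_inverse_Suc]) (use ab ms(2) in \<open>auto simp: g_def\<close>)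
  then show ?thesis by blast
qed

lemma RS_integral_diff:
  assumes "a < b" "bounded_variation_on F a b" "bounded_variation_on G a b" "continuous_on {a..b} f"
  shows "RS_integral f (\<lambda>x. F x - G x) a b = RS_integral f F a b - RS_integral f G a b"
proof -
  obtain I I' where "has_RS_integral f F a b I" "has_RS_integral f G a b I'"
    using has_RS_integral_exists assms by blast
  then show ?thesis using assms(1) by (simp add: RS_integral_eqI has_RS_integral_diff)
qed

section \<open>Sufficiency of the conditions\<close>

lemma has_RS_integral_nonneg_if_smooth:
  assumes H: "bounded_variation_on H a b" and ab: "a \<le> b" and Ha: "H a = 0"
    and Jb: "\<And>k. k \<le> n \<Longrightarrow> J k H a b = 0"
    and Jn: "\<And>x. x \<in> {a..b} \<Longrightarrow> (-1)^(n+1) * J n H a x \<ge> 0"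
    and D: "\<And>k x. k \<le> n \<Longrightarrow> (D k has_real_derivative D (Suc k) x) (at x)"
    and D_cont: "continuous_on {a..b} (D (Suc n))" and D_nonneg: "\<And>x. x \<in> {a..b} \<Longrightarrow> D (Suc n) x \<ge> 0"
  shows "\<exists>I. has_RS_integral (D 0) H a b I \<and> I \<ge> 0"
proof -
  have "has_RS_integral (D 0) H a b ((-1)^Suc n * integral {a..b} (\<lambda>s. J n H a s * D (Suc n) s))"
    using has_RS_integral_J_expansion[OF H ab Ha D D_cont] Jb by simp
  moreover have "(-1)^Suc n * integral {a..b} (\<lambda>s. J n H a s * D (Suc n) s)
      = integral {a..b} (\<lambda>s. ((-1)^(n+1) * J n H a s) * D (Suc n) s)"
    by (simp add: mult.assoc)
  moreover have "integral {a..b} (\<lambda>s. ((-1)^(n+1) * J n H a s) * D (Suc n) s) \<ge> 0"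
  proof (rule integral_nonneg)
    show "(\<lambda>s. ((-1)^(n+1) * J n H a s) * D (Suc n) s) integrable_on {a..b}"
      using integrable_on_mult_right[OF bounded_variation_mult_continuous_integrable[OF bounded_variation_J[OF H] D_cont],
          of "(-1)^(n+1)"]
      by (simp add: mult.assoc)
    show "0 \<le> (-1)^(n+1) * J n H a s * D (Suc n) s" if "s \<in> {a..b}" for s
      using Jn[OF that] D_nonneg[OF that] by (rule mult_nonneg_nonneg)
  qed
  ultimately show ?thesis by (metis (no_types))
qed

lemma has_RS_integral_nonneg_if_J_conditions:
  assumes ab: "a < b" and n: "n \<ge> 1" and H: "bounded_variation_on H a b" and Ha: "H a = 0"
    and Jb: "\<And>k. k \<le> n \<Longrightarrow> J k H a b = 0"
    and Jn: "\<And>x. x \<in> {a<..<b} \<Longrightarrow> (-1)^(n+1) * J n H a x \<ge> 0"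
    and f: "continuous_on {a..b} f" "n_convex_on n {a..b} f"
  shows "\<exists>I. has_RS_integral f H a b I \<and> I \<ge> 0"
proof -
  obtain ms where ms: "\<And>k. ms k \<ge> Suc n"
    "\<And>k x. x \<in> {a..b} \<Longrightarrow> \<bar>f x - bernstein_deriv a b (ms k) (grid_values f a b (ms k)) 0 x\<bar> \<le> 1 / (real k + 1)"
    using bernstein_approx_sequence[OF f(1) ab] by blast
  define D where "D k = bernstein_deriv a b (ms k) (grid_values f a b (ms k))" for k
  have Jn_Icc: "(-1)^(n+1) * J n H a x \<ge> 0" if "x \<in> {a..b}" for x
  proof -
    have "J n H a a = 0" using n by (cases n) auto
    then show ?thesis using that Jn Jb[of n] by (cases "x = a \<or> x = b") auto
  qed
  have "\<exists>I. has_RS_integral (D k 0) H a b I \<and> I \<ge> 0" for k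
  proof (rule has_RS_integral_nonneg_if_smooth[OF H _ Ha Jb Jn_Icc])
    show "\<And>j x. j \<le> n \<Longrightarrow> (D k j has_real_derivative D k (Suc j) x) (at x)"
      unfolding D_def using ms(1)[of k] ab by (intro has_real_derivative_bernstein_deriv) auto
    show "D k (Suc n) x \<ge> 0" if "x \<in> {a..b}" for x
      unfolding D_def using ms(1) that
      by (intro bernstein_deriv_nonneg_if_n_convex[OF f(2) ab]) auto
  qed (use ab in \<open>auto simp: D_def continuous_on_bernstein_deriv\<close>)
  then obtain I where I: "\<And>k. has_RS_integral (D k 0) H a b (I k)" "\<And>k. I k \<ge> 0" by metis
  have "\<exists>L. has_RS_integral f H a b L \<and> I \<longlonglongrightarrow> L"
    by (rule has_RS_integral_uniform_limit[OF _ H I(1) _ LIMSEQ_inverse_Suc]) (use ab ms(2) in \<open>auto simp: D_def\<close>)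
  then obtain L where "has_RS_integral f H a b L" "I \<longlonglongrightarrow> L" by blast
  moreover have "L \<ge> 0" using \<open>I \<longlonglongrightarrow> L\<close> I(2) by (intro LIMSEQ_le_const) auto
  ultimately show ?thesis by blast
qed

lemma pderiv_roots_interlace:
  fixes Q :: "real poly"
  assumes Z: "finite Z" "card Z = Suc (Suc k)" "Z \<subseteq> {a..b}" and roots: "\<And>z. z \<in> Z \<Longrightarrow> poly Q z = 0"
  obtains Z' where "finite Z'" "card Z' = Suc k" "Z' \<subseteq> {a..b}" "\<And>z. z \<in> Z' \<Longrightarrow> poly (pderiv Q) z = 0"
proof -
  define zs where "zs = sorted_list_of_set Z"
  have zs: "sorted_wrt (<) zs" "set zs = Z" "length zs = Suc (Suc k)"
    unfolding zs_def using Z by auto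
  have zs_in: "zs ! i \<in> Z" if "i < Suc (Suc k)" for i using zs that by (metis nth_mem)
  have "\<exists>\<xi>. zs ! i < \<xi> \<and> \<xi> < zs ! Suc i \<and> poly (pderiv Q) \<xi> = 0" if "i < Suc k" for i
    using poly_MVT[of "zs ! i" "zs ! Suc i" Q] sorted_wrt_nth_less[OF zs(1), of i "Suc i"]
      roots zs_in[of i] zs_in[of "Suc i"] zs(3) that by auto
  then obtain \<xi> where \<xi>: "\<And>i. i < Suc k \<Longrightarrow> zs ! i < \<xi> i \<and> \<xi> i < zs ! Suc i \<and> poly (pderiv Q) (\<xi> i) = 0"
    by metis
  have "strict_mono_on {..<Suc k} \<xi>"
  proof (rule strict_mono_onI)
    fix i j assume "i \<in> {..<Suc k}" "j \<in> {..<Suc k}" "i < j"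
    moreover have "zs ! Suc i \<le> zs ! j"
      using sorted_wrt_nth_less[OF zs(1), of "Suc i" j] zs(3) \<open>i < j\<close> \<open>j \<in> {..<Suc k}\<close>
      by (cases "Suc i = j") auto
    ultimately show "\<xi> i < \<xi> j" using \<xi>[of i] \<xi>[of j] by force
  qed
  then have "card (\<xi> ` {..<Suc k}) = Suc k" by (simp add: card_image strict_mono_on_imp_inj_on)
  moreover have "\<xi> ` {..<Suc k} \<subseteq> {a..b}"
  proof
    fix y assume "y \<in> \<xi> ` {..<Suc k}"
    then obtain i where i: "i < Suc k" "y = \<xi> i" by auto
    then have "zs ! i \<in> {a..b}" "zs ! Suc i \<in> {a..b}" using zs_in[of i] zs_in[of "Suc i"] Z(3) by auto
    then show "y \<in> {a..b}" using \<xi>[OF i(1)] i(2) by auto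
  qed
  ultimately show ?thesis using that[of "\<xi> ` {..<Suc k}"] \<xi> by auto
qed

lemma higher_pderiv_has_root:
  fixes Q :: "real poly"
  assumes "finite Z" "card Z = Suc k" "Z \<subseteq> {a..b}" "\<And>z. z \<in> Z \<Longrightarrow> poly Q z = 0"
  shows "\<exists>\<xi>\<in>{a..b}. poly ((pderiv ^^ k) Q) \<xi> = 0"
  using assms
proof (induction k arbitrary: Q Z)
  case 0
  then obtain z where "Z = {z}" by (metis One_nat_def card_1_singletonE)
  then show ?case using 0 by auto
next
  case (Suc k)
  obtain Z' where "finite Z'" "card Z' = Suc k" "Z' \<subseteq> {a..b}" "\<And>z. z \<in> Z' \<Longrightarrow> poly (pderiv Q) z = 0"
    using pderiv_roots_interlace[OF Suc.prems] by blast
  from Suc.IH[OF this] show ?case by (simp add: funpow_Suc_right del: funpow.simps)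
qed

lemma higher_pderiv_eq_const:
  fixes p :: "real poly"
  assumes "degree p \<le> N"
  shows "(pderiv ^^ N) p = [:fact N * coeff p N:]"
proof (rule poly_eqI)
  fix n
  show "coeff ((pderiv ^^ N) p) n = coeff [:fact N * coeff p N:] n"
  proof (cases n)
    case 0 then show ?thesis by (simp add: coeff_higher_pderiv pochhammer_fact)
  next
    case (Suc n')
    then have "coeff p (n + N) = 0" using assms by (intro coeff_eq_0) auto
    then show ?thesis using Suc by (simp add: coeff_higher_pderiv)
  qed
qed

lemma higher_pderiv_eq_0: "degree p < N \<Longrightarrow> (pderiv ^^ N) (p :: real poly) = 0"
  using higher_pderiv_eq_const[of p N] by (simp add: coeff_eq_0)

lemma Lagrange_interpolation:
  assumes inj: "inj_on x {..N}"
  obtains L :: "real poly" where "degree L \<le> N" "\<And>k. k \<le> N \<Longrightarrow> poly L (x k) = f (x k)"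
    "coeff L N = divided_diff N x f"
proof
  define w where "w i = (\<Prod>j\<in>{..N} - {i}. x i - x j)" for i
  define l where "l i = (\<Prod>j\<in>{..N} - {i}. [:- x j, 1:])" for i
  define L where "L = (\<Sum>i\<le>N. smult (f (x i) / w i) (l i))"
  have w: "w i \<noteq> 0" if "i \<le> N" for i
    unfolding w_def using inj that by (auto simp: inj_on_def)
  have degl: "degree (l i) = N" if "i \<le> N" for i
    unfolding l_def using that by (subst degree_prod_eq_sum_degree) auto
  have lead: "lead_coeff (l i) = 1" for i unfolding l_def lead_coeff_prod by simp
  have lcl: "coeff (l i) N = 1" if "i \<le> N" for i using degl[OF that] lead[of i] by simp
  have polyl: "poly (l i) (x k) = (if k = i then w i else 0)" if "i \<le> N" "k \<le> N" for i k
    unfolding l_def w_def using that by (auto simp: poly_prod prod_zero_iff)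
  show "degree L \<le> N" unfolding L_def
    by (intro degree_sum_le) (auto intro: order_trans[OF degree_smult_le] simp: degl)
  show "poly L (x k) = f (x k)" if "k \<le> N" for k
  proof -
    have "poly L (x k) = (\<Sum>i\<le>N. f (x i) / w i * poly (l i) (x k))"
      unfolding L_def by (simp add: poly_sum)
    also have "\<dots> = (\<Sum>i\<le>N. if i = k then f (x k) else 0)"
      by (intro sum.cong) (use polyl that w in auto)
    finally show ?thesis using that by simp
  qed
  have "coeff L N = (\<Sum>i\<le>N. f (x i) / w i * coeff (l i) N)"
    unfolding L_def by (simp add: coeff_sum)
  then show "coeff L N = divided_diff N x f"
    unfolding divided_diff_def w_def by (simp add: lcl)
qed

lemma divided_diff_poly_mean_value:
  fixes P :: "real poly"
  assumes "inj_on x {..N}" "\<And>i. i \<le> N \<Longrightarrow> x i \<in> {a..b}"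
  shows "\<exists>\<xi>\<in>{a..b}. poly ((pderiv ^^ N) P) \<xi> = fact N * divided_diff N x (poly P)"
proof -
  obtain L where L: "degree L \<le> N" "\<And>k. k \<le> N \<Longrightarrow> poly L (x k) = poly P (x k)"
    "coeff L N = divided_diff N x (poly P)"
    using Lagrange_interpolation[OF assms(1)] by blast
  have "\<exists>\<xi>\<in>{a..b}. poly ((pderiv ^^ N) (P - L)) \<xi> = 0"
    using assms L(2) by (intro higher_pderiv_has_root[of "x ` {..N}"]) (auto simp: card_image)
  moreover have "(pderiv ^^ N) (P - L) = (pderiv ^^ N) P - [:fact N * divided_diff N x (poly P):]"
    using higher_pderiv_add[of N P "- L"] higher_pderiv_smult[of N "-1" L] higher_pderiv_eq_const[OF L(1)] L(3)
    by simp
  ultimately show ?thesis by auto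
qed

lemma n_convex_on_poly:
  fixes P :: "real poly"
  assumes "\<And>s. s \<in> {a..b} \<Longrightarrow> poly ((pderiv ^^ Suc n) P) s \<ge> 0"
  shows "n_convex_on n {a..b} (poly P)"
  unfolding n_convex_on_def
proof (intro allI impI)
  fix x :: "nat \<Rightarrow> real" assume "(\<forall>i\<le>n + 1. x i \<in> {a..b}) \<and> inj_on x {..n + 1}"
  then obtain \<xi> where "\<xi> \<in> {a..b}" "poly ((pderiv ^^ (n+1)) P) \<xi> = fact (n+1) * divided_diff (n+1) x (poly P)"
    using divided_diff_poly_mean_value[of x "n+1" a b P] by auto
  then show "divided_diff (n + 1) x (poly P) \<ge> 0"
    using assms by (metis Suc_eq_plus1 fact_gt_zero zero_le_mult_iff not_le)
qed

lemma higher_pderiv_linear_power: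
  fixes c :: real
  assumes "k \<le> j"
  shows "(pderiv ^^ k) ([:c, 1:] ^ j) = smult (fact j / fact (j - k)) ([:c, 1:] ^ (j - k))"
  using assms
proof (induction k)
  case (Suc k)
  define d where "d = j - Suc k"
  have jd: "j - k = Suc d" unfolding d_def using Suc.prems by simp
  have "(pderiv ^^ Suc k) ([:c, 1:] ^ j) = pderiv (smult (fact j / fact (j - k)) ([:c, 1:] ^ (j - k)))"
    using Suc by simp
  also have "\<dots> = smult (fact j / fact (j - k) * real (Suc d)) ([:c, 1:] ^ d)"
    unfolding jd by (simp add: pderiv_smult pderiv_power_Suc pderiv_pCons del: power_Suc)
  also have "fact j / fact (j - k) * real (Suc d) = fact j / fact d"
    unfolding jd by (simp add: fact_Suc field_simps del: of_nat_Suc)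
  finally show ?case unfolding d_def by simp
qed simp

lemma pderiv_surj: "\<exists>P. pderiv P = (q :: real poly)"
proof
  have "pderiv (\<Sum>i\<le>degree q. monom (coeff q i / real (Suc i)) (Suc i))
      = (\<Sum>i\<le>degree q. pderiv (monom (coeff q i / real (Suc i)) (Suc i)))"
    using higher_pderiv_sum[of 1 "\<lambda>i. monom (coeff q i / real (Suc i)) (Suc i)" "{..degree q}"] by simp
  also have "\<dots> = (\<Sum>i\<le>degree q. monom (coeff q i) i)"
    by (intro sum.cong refl) (simp add: pderiv_monom)
  finally show "pderiv (\<Sum>i\<le>degree q. monom (coeff q i / real (Suc i)) (Suc i)) = q"
    by (simp add: poly_as_sum_of_monoms)
qed

lemma higher_pderiv_surj: "\<exists>P. (pderiv ^^ k) P = (q :: real poly)"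
proof (induction k arbitrary: q)
  case (Suc k)
  obtain A where "pderiv A = q" using pderiv_surj by blast
  moreover obtain P where "(pderiv ^^ k) P = A" using Suc.IH by blast
  ultimately have "(pderiv ^^ Suc k) P = q" by simp
  then show ?case by blast
qed simp

lemma real_poly_upper_approx:
  fixes \<sigma> :: "real \<Rightarrow> real"
  assumes "continuous_on {a..b} \<sigma>" "e > 0"
  obtains q :: "real poly" where "\<And>s. s \<in> {a..b} \<Longrightarrow> \<sigma> s \<le> poly q s \<and> poly q s \<le> \<sigma> s + e"
proof -
  obtain g where g: "real_polynomial_function g" "\<And>x. x \<in> {a..b} \<Longrightarrow> \<bar>\<sigma> x - g x\<bar> < e / 2"
    using Stone_Weierstrass_real_polynomial_function[OF compact_Icc assms(1), of "e / 2"] assms(2) by auto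
  obtain c n where "g = (\<lambda>x. \<Sum>i\<le>n. c i * x ^ i)" using g(1) real_polynomial_function_iff_sum by blast
  then have q: "poly ((\<Sum>i\<le>n. monom (c i) i) + [:e / 2:]) x = g x + e / 2" for x
    by (simp add: poly_sum poly_monom)
  show ?thesis
  proof (rule that)
    fix s assume "s \<in> {a..b}"
    then show "\<sigma> s \<le> poly ((\<Sum>i\<le>n. monom (c i) i) + [:e / 2:]) s \<and>
        poly ((\<Sum>i\<le>n. monom (c i) i) + [:e / 2:]) s \<le> \<sigma> s + e"
      unfolding q using g(2)[of s] by linarith
  qed
qed

lemma integral_pos_if_continuous_nonneg:
  fixes g :: "real \<Rightarrow> real"
  assumes "a < b" "continuous_on {a..b} g" "\<And>s. s \<in> {a..b} \<Longrightarrow> g s \<ge> 0" "x0 \<in> {a..b}" "g x0 > 0"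
  shows "integral {a..b} g > 0"
proof -
  have "integral {a..b} g \<noteq> 0" using integral_eq_0_iff[of a b g] assms by force
  moreover have "integral {a..b} g \<ge> 0" using assms(2,3) by (intro integral_nonneg integrable_continuous_real) auto
  ultimately show ?thesis by simp
qed

text \<open>The witness is a polynomial approximation from above of \<open>max 0 (- K)\<close>.\<close>

lemma nonneg_poly_with_negative_integral:
  assumes ab: "a < b" and K: "continuous_on {a..b} K" and x0: "x0 \<in> {a..b}" "K x0 < 0"
  obtains q :: "real poly" where "\<And>s. s \<in> {a..b} \<Longrightarrow> poly q s \<ge> 0"
    "integral {a..b} (\<lambda>s. K s * poly q s) < 0"
proof -
  define \<sigma> where "\<sigma> s = max 0 (- K s)" for s
  have \<sigma>: "continuous_on {a..b} \<sigma>" unfolding \<sigma>_def by (intro continuous_intros K)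
  have K\<sigma>: "K s * \<sigma> s = - ((\<sigma> s) ^ 2)" for s unfolding \<sigma>_def by (simp add: max_def power2_eq_square)
  define T where "T = integral {a..b} (\<lambda>s. \<sigma> s ^ 2)"
  have T: "T > 0"
    unfolding T_def using x0 ab \<sigma>
    by (intro integral_pos_if_continuous_nonneg continuous_on_power) (auto simp: \<sigma>_def)
  obtain M where M: "M \<ge> 0" "\<And>x. x \<in> {a..b} \<Longrightarrow> \<bar>K x\<bar> \<le> M"
    using continuous_on_Icc_abs_bound[OF K] by blast
  define e where "e = T / ((M + 1) * (b - a + 1))"
  have e: "e > 0" unfolding e_def using T M ab by simp
  obtain q where q: "\<And>s. s \<in> {a..b} \<Longrightarrow> \<sigma> s \<le> poly q s \<and> poly q s \<le> \<sigma> s + e"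
    using real_poly_upper_approx[OF \<sigma> e] by blast
  have "integral {a..b} (\<lambda>s. K s * poly q s)
      = integral {a..b} (\<lambda>s. K s * \<sigma> s) + integral {a..b} (\<lambda>s. K s * (poly q s - \<sigma> s))"
    by (subst integral_add[symmetric]) (auto intro!: integrable_continuous_real continuous_intros K \<sigma>
        simp: algebra_simps)
  also have "integral {a..b} (\<lambda>s. K s * \<sigma> s) = - T" unfolding K\<sigma> T_def by simp
  also have "integral {a..b} (\<lambda>s. K s * (poly q s - \<sigma> s)) \<le> M * e * (b - a)"
    using integral_mult_abs_le[of K "\<lambda>s. poly q s - \<sigma> s" a b M e] q M ab
    by (force intro!: integrable_continuous_real continuous_intros K \<sigma>)
  also have "M * e * (b - a) < T"
  proof -
    have "M * (b - a) < (M + 1) * (b - a + 1)" using M(1) ab by (simp add: algebra_simps)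
    then have "M * (b - a) / ((M + 1) * (b - a + 1)) < 1" using M(1) ab by (simp add: pos_divide_less_eq)
    then have "T * (M * (b - a) / ((M + 1) * (b - a + 1))) < T * 1" using T by (rule mult_strict_left_mono)
    then show ?thesis unfolding e_def by (simp add: field_simps)
  qed
  finally show ?thesis using that q \<sigma>_def by force
qed

section \<open>Necessity of the conditions\<close>

lemma has_RS_integral_poly_expansion:
  fixes P :: "real poly"
  assumes "bounded_variation_on H a b" "a \<le> b" "H a = 0"
  shows "has_RS_integral (poly P) H a b
     ((\<Sum>k\<le>r. (-1)^k * poly ((pderiv ^^ k) P) b * J k H a b)
       + (-1)^Suc r * integral {a..b} (\<lambda>s. J r H a s * poly ((pderiv ^^ Suc r) P) s))"
  using has_RS_integral_J_expansion[OF assms, of r "\<lambda>k. poly ((pderiv ^^ k) P)"]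
  by (simp add: continuous_on_poly)

lemma J_endpoint_eq_0_if_RS_nonneg:
  assumes ab: "a < b" and H: "bounded_variation_on H a b" "H a = 0"
    and nonneg: "\<And>P :: real poly. (\<And>s. s \<in> {a..b} \<Longrightarrow> poly ((pderiv ^^ Suc n) P) s \<ge> 0) \<Longrightarrow>
                   RS_integral (poly P) H a b \<ge> 0"
    and j: "j \<le> n"
  shows "J j H a b = 0"
proof -
  define P :: "real poly" where "P = [:-b, 1:] ^ j"
  have deg: "degree P = j" "degree (- P) = j" unfolding P_def by (simp_all add: degree_power_eq)
  have "poly ((pderiv ^^ k) P) b = (if k = j then fact j else 0)" if "k \<le> j" for k
    unfolding P_def higher_pderiv_linear_power[OF that] using that by auto
  then have "(\<Sum>k\<le>j. (-1)^k * poly ((pderiv ^^ k) P) b * J k H a b)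
      = (\<Sum>k\<le>j. if k = j then (-1)^j * fact j * J j H a b else 0)"
    by (intro sum.cong) auto
  also have "\<dots> = (-1)^j * fact j * J j H a b" by simp
  finally have "has_RS_integral (poly P) H a b ((-1)^j * fact j * J j H a b)"
    using has_RS_integral_poly_expansion[OF H(1) _ H(2), of P j] higher_pderiv_eq_0[of P "Suc j"] deg ab
    by simp
  moreover have "poly (- P) = (\<lambda>x. - poly P x)" by (rule ext) simp
  ultimately have "RS_integral (poly P) H a b = (-1)^j * fact j * J j H a b"
    "RS_integral (poly (- P)) H a b = - ((-1)^j * fact j * J j H a b)"
    using ab by (auto intro: RS_integral_eqI has_RS_integral_uminus)
  moreover have "RS_integral (poly P) H a b \<ge> 0" "RS_integral (poly (- P)) H a b \<ge> 0"
    using higher_pderiv_eq_0[of P "Suc n"] higher_pderiv_eq_0[of "- P" "Suc n"] j deg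
    by (auto intro!: nonneg simp del: funpow.simps)
  ultimately show ?thesis by simp
qed

lemma J_sign_if_RS_nonneg:
  assumes ab: "a < b" and n: "n \<ge> 1" and H: "bounded_variation_on H a b" "H a = 0"
    and nonneg: "\<And>P :: real poly. (\<And>s. s \<in> {a..b} \<Longrightarrow> poly ((pderiv ^^ Suc n) P) s \<ge> 0) \<Longrightarrow>
                   RS_integral (poly P) H a b \<ge> 0"
    and Jb: "\<And>k. k \<le> n \<Longrightarrow> J k H a b = 0" and x: "x \<in> {a..b}"
  shows "(-1)^(n+1) * J n H a x \<ge> 0"
proof (rule ccontr)
  define K where "K s = (-1)^(n+1) * J n H a s" for s
  assume "\<not> (-1)^(n+1) * J n H a x \<ge> 0"
  then have "K x < 0" unfolding K_def by simp
  moreover have "continuous_on {a..b} K"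
    unfolding K_def using continuous_on_J[OF H(1), of "n - 1"] n by (intro continuous_intros) simp
  ultimately obtain q where q: "\<And>s. s \<in> {a..b} \<Longrightarrow> poly q s \<ge> 0"
    "integral {a..b} (\<lambda>s. K s * poly q s) < 0"
    using nonneg_poly_with_negative_integral[OF ab _ x] by blast
  obtain P where P: "(pderiv ^^ Suc n) P = q" using higher_pderiv_surj by blast
  have "has_RS_integral (poly P) H a b ((-1)^Suc n * integral {a..b} (\<lambda>s. J n H a s * poly q s))"
    using has_RS_integral_poly_expansion[OF H(1) _ H(2), of P n] Jb ab P by simp
  then have "RS_integral (poly P) H a b = integral {a..b} (\<lambda>s. K s * poly q s)"
    using ab unfolding K_def by (simp add: RS_integral_eqI mult.assoc)
  then show False using nonneg[of P] P q by fastforce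
qed

lemma RS_integral_nonneg_on_n_convex_iff:
  assumes ab: "a < b" and n: "n \<ge> 1" and H: "bounded_variation_on H a b" "H a = 0"
  shows "(\<forall>f. continuous_on {a..b} f \<and> n_convex_on n {a..b} f \<longrightarrow> RS_integral f H a b \<ge> 0) \<longleftrightarrow>
         (\<forall>k\<le>n. J k H a b = 0) \<and> (\<forall>x\<in>{a<..<b}. (-1)^(n+1) * J n H a x \<ge> 0)"
proof
  assume f: "\<forall>f. continuous_on {a..b} f \<and> n_convex_on n {a..b} f \<longrightarrow> RS_integral f H a b \<ge> 0"
  have poly: "RS_integral (poly P) H a b \<ge> 0"
    if "\<And>s. s \<in> {a..b} \<Longrightarrow> poly ((pderiv ^^ Suc n) P) s \<ge> 0" for P :: "real poly"
    using f n_convex_on_poly[OF that] by (simp add: continuous_on_poly)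
  have Jb: "J k H a b = 0" if "k \<le> n" for k
    using J_endpoint_eq_0_if_RS_nonneg[OF ab H poly that] .
  then show "(\<forall>k\<le>n. J k H a b = 0) \<and> (\<forall>x\<in>{a<..<b}. (-1)^(n+1) * J n H a x \<ge> 0)"
    using J_sign_if_RS_nonneg[OF ab n H poly Jb] by auto
next
  assume "(\<forall>k\<le>n. J k H a b = 0) \<and> (\<forall>x\<in>{a<..<b}. (-1)^(n+1) * J n H a x \<ge> 0)"
  then show "\<forall>f. continuous_on {a..b} f \<and> n_convex_on n {a..b} f \<longrightarrow> RS_integral f H a b \<ge> 0"
    using has_RS_integral_nonneg_if_J_conditions[OF ab n H] RS_integral_eqI ab
    by (metis less_imp_le)
qed

lemma all_le_iff_0_1_and_Icc:
  fixes P :: "nat \<Rightarrow> bool"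
  assumes "n \<ge> 1"
  shows "(\<forall>k\<le>n. P k) \<longleftrightarrow> P 0 \<and> P 1 \<and> (\<forall>k\<in>{2..n}. P k)"
proof
  assume "P 0 \<and> P 1 \<and> (\<forall>k\<in>{2..n}. P k)"
  moreover have "k = 0 \<or> k = 1 \<or> k \<in> {2..n}" if "k \<le> n" for k using that by auto
  ultimately show "\<forall>k\<le>n. P k" by blast
qed (use assms in auto)

theorem theorem2p1:
  fixes a b :: real and n :: nat and F1 F2 :: "real \<Rightarrow> real"
  assumes "a < b" and "n \<ge> 1"
    and "bounded_variation_on F1 a b" and "bounded_variation_on F2 a b"
    and "F1 a = F2 a"
  shows "(\<forall>f. continuous_on {a..b} f \<and> n_convex_on n {a..b} f \<longrightarrow>
            RS_integral f F1 a b \<le> RS_integral f F2 a b)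
     \<longleftrightarrow> (F1 b = F2 b
         \<and> integral {a..b} F1 = integral {a..b} F2
         \<and> (\<forall>k\<in>{2..n}. J k F1 a b = J k F2 a b)
         \<and> (\<forall>x\<in>{a<..<b}. (-1) ^ (n+1) * J n F1 a x \<le> (-1) ^ (n+1) * J n F2 a x))"
proof -
  define H where "H x = F2 x - F1 x" for x
  have H: "bounded_variation_on H a b" "H a = 0"
    unfolding H_def using assms(3-5) by (auto intro: bounded_variation_diff)
  have JH: "J k H a x = J k F2 a x - J k F1 a x" if "x \<in> {a..b}" for k x
    unfolding H_def using J_diff[OF assms(4,3) that] .
  have "(\<forall>k\<le>n. J k H a b = 0) \<longleftrightarrow> (\<forall>k\<le>n. J k F1 a b = J k F2 a b)"
    using JH[of b] assms(1) by auto
  also have "\<dots> \<longleftrightarrow> F1 b = F2 b \<and> integral {a..b} F1 = integral {a..b} F2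
      \<and> (\<forall>k\<in>{2..n}. J k F1 a b = J k F2 a b)"
    unfolding all_le_iff_0_1_and_Icc[OF assms(2)] J_1_eq by simp
  finally have endpoint: "(\<forall>k\<le>n. J k H a b = 0) \<longleftrightarrow> \<dots>" .
  have sign: "(-1)^(n+1) * J n H a x \<ge> 0 \<longleftrightarrow> (-1)^(n+1) * J n F1 a x \<le> (-1)^(n+1) * J n F2 a x"
    if "x \<in> {a<..<b}" for x
    using JH[of x] that by (simp add: right_diff_distrib)
  have RS: "RS_integral f H a b \<ge> 0 \<longleftrightarrow> RS_integral f F1 a b \<le> RS_integral f F2 a b"
    if "continuous_on {a..b} f" for f
    unfolding H_def using RS_integral_diff[OF assms(1,4,3) that] by simp
  show ?thesis
    using RS_integral_nonneg_on_n_convex_iff[OF assms(1,2) H] endpoint sign RS by blast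
qed

end
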